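(* For every $S\in\{\tfrac12,1,\tfrac32,\dots\}$, every $L\in\mathbb N$ and every $\beta>0$, $$\frac{\langle D_L|e^{-\beta H^{(L)}_{\mathrm{AF}}}|D_L\rangle}{\operatorname{tr}e^{-\beta H^{(L)}_{\mathrm{AF}}}}\ \ge\ \frac1{(2S+1)^L}.$$ In particular the seed vector $|D_L\rangle$ has nonzero projection onto the ground-state eigenspace of $H^{(L)}_{\mathrm{AF}}$.
   Context: $\Lambda_L=\{-L+1,\dots,L\}$, $\mathcal H_L=\bigotimes_{v\in\Lambda_L}\mathbb C^{2S+1}$, with $|m\rangle$ ($m=-S,\dots,S$) the eigenbasis of the spin-$S$ operator $S^z$ and $|m,m'\rangle_{u,v}=|m\rangle_u\otimes|m'\rangle_v$. $P^{(0)}_{u,v}=\frac1{2S+1}\sum_{m,m'=-S}^S(-1)^{m-m'}(|m,-m\rangle\langle m',-m'|)_{u,v}$ (the projection onto the singlet of $\mathbf S_u+\mathbf S_v$), $H^{(L)}_{\mathrm{AF}}=-(2S+1)\sum_{u=-L+1}^{L-1}P^{(0)}_{u,u+1}$, and $|D_L\rangle=\bigotimes_{j=1}^L\sum_{m=-S}^S(-1)^m|m,-m\rangle_{-L+2j-1,-L+2j}$. *)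

theory Defs
  imports "Jordan_Normal_Form.Matrix" "Jordan_Normal_Form.Char_Poly"
begin

(* The spin S is encoded by the natural number n = 2S (n >= 1), so S ranges over {1/2,1,3/2,...}.
   The local basis state |m>, m = -S..S, is encoded by the digit j = m + S in {0..n}; so -m <-> n - j.
   The 2L sites v = -L+1,...,L of Lambda_L are encoded by positions p = v + L - 1 in {0..<2L}.
   A product basis state of H_L is encoded as an index x < (n+1)^(2L) whose base-(n+1) digit
   at position p is the local state of site p. *)

definition digit :: "nat \<Rightarrow> nat \<Rightarrow> nat \<Rightarrow> nat" where
  "digit n p x = (x div (n + 1) ^ p) mod (n + 1)"

definition hdim :: "nat \<Rightarrow> nat \<Rightarrow> nat" where
  "hdim n L = (n + 1) ^ (2 * L)"

(* P^(0)_{u,u+1} for the sites at positions p, p+1: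
   <x|P|y> = 1/(2S+1) (-1)^(m-m') [x_p = -x_{p+1}] [y_p = -y_{p+1}] [x_q = y_q for all other q] *)
definition singlet_proj :: "nat \<Rightarrow> nat \<Rightarrow> nat \<Rightarrow> real mat" where
  "singlet_proj n L p = mat (hdim n L) (hdim n L) (\<lambda>(x, y).
     if digit n (p + 1) x = n - digit n p x \<and> digit n (p + 1) y = n - digit n p y
        \<and> (\<forall>q < 2 * L. q \<noteq> p \<and> q \<noteq> p + 1 \<longrightarrow> digit n q x = digit n q y)
     then (-1) ^ (digit n p x + digit n p y) / real (n + 1) else 0)"

definition H_AF :: "nat \<Rightarrow> nat \<Rightarrow> real mat" where
  "H_AF n L = mat (hdim n L) (hdim n L) (\<lambda>(x, y).
     - real (n + 1) * (\<Sum>p | p + 1 < 2 * L. singlet_proj n L p $$ (x, y)))"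

(* |D_L> = tensor_{j=1}^L sum_m (-1)^m |m,-m>_{-L+2j-1,-L+2j}; the pair j occupies positions
   2(j-1), 2(j-1)+1.  The sign (-1)^m is taken as (-1)^(m+S) = (-1)^digit, which differs from
   (-1)^m only by the global phase (-1)^(-S L) (irrelevant for everything below). *)
definition D_vec :: "nat \<Rightarrow> nat \<Rightarrow> real vec" where
  "D_vec n L = vec (hdim n L) (\<lambda>x.
     \<Prod>j<L. (if digit n (2 * j + 1) x = n - digit n (2 * j) x
              then (-1) ^ digit n (2 * j) x else 0))"

definition mat_trace :: "real mat \<Rightarrow> real" where
  "mat_trace A = (\<Sum>i<dim_row A. A $$ (i, i))"

definition mat_exp :: "real mat \<Rightarrow> real mat" where
  "mat_exp A = mat (dim_row A) (dim_col A) (\<lambda>(i, j). \<Sum>k. (A ^\<^sub>m k) $$ (i, j) / fact k)"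

end

(*
  Conjugated by the diagonal signs gauge x = (-1)^(sum of the digits m + S on even sites), -H_AF
  becomes (2S+1) times a sum over bonds of 0/1 matrices linking two basis states when both
  carry a pair m, -m on the bond and they agree elsewhere, and D_L becomes the indicator of
  the dimer configurations. So tr (-H_AF)^k and <D_L, (-H_AF)^k D_L> count, over all words of
  k bonds, the closed paths and the paths between dimer configurations. Colouring every site
  of every time slice of a path by its spin (reflected on odd sites) makes paths the
  colourings of a grid constant along equality constraints; adding the L dimer constraints
  to the first slice of a closed path costs at most a factor (2S+1)^L and then forces them on
  the last slice. Hence tr (-H_AF)^k <= (2S+1)^L <D_L, (-H_AF)^k D_L> for every k, and
  summing the exponential series gives the bound on the Gibbs overlap.

  For the ground state: -H_AF is symmetric and positive semidefinite with top eigenvalue l,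
  so tr (-H_AF)^(2k) >= l^(2k). If D_L were orthogonal to the top eigenspace, then
  <D_L, (-H_AF)^(2k) D_L> would grow at most like m^k with m < l^2, the top eigenvalue of
  H_AF^2 on the orthogonal complement, contradicting the same inequality.
*)

theory Submission
  imports Defs "HOL-Analysis.Function_Topology" "HOL-Library.FuncSet" "HOL-Analysis.Convex"
begin

section \<open>Counting colourings under equality constraints\<close>

definition colorings :: "'v set \<Rightarrow> 'c set \<Rightarrow> ('v \<times> 'v) set \<Rightarrow> ('v \<Rightarrow> 'c) set" where
  "colorings V C R = {c \<in> V \<rightarrow>\<^sub>E C. \<forall>(a, b)\<in>R. c a = c b}"

definition component :: "('v \<times> 'v) set \<Rightarrow> 'v \<Rightarrow> 'v set" where
  "component R v = {w. (v, w) \<in> (R \<union> R\<inverse>)\<^sup>*}"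

lemma finite_colorings: "finite V \<Longrightarrow> finite C \<Longrightarrow> finite (colorings V C R)"
  unfolding colorings_def by (rule finite_subset[of _ "V \<rightarrow>\<^sub>E C"]) (auto intro: finite_PiE)

lemma component_closed: "(a, b) \<in> R \<Longrightarrow> a \<in> component R v \<longleftrightarrow> b \<in> component R v"
  unfolding component_def by (auto intro: rtrancl_into_rtrancl)

lemma coloring_const_on_component:
  assumes c: "c \<in> colorings V C R" and w: "w \<in> component R v"
  shows "c w = c v"
proof -
  have "(v, w) \<in> (R \<union> R\<inverse>)\<^sup>*" using w unfolding component_def by simp
  then show ?thesis
  proof (induction rule: rtrancl_induct)
    case (step y z)
    with c show ?case unfolding colorings_def by auto
  qed simp
qed

lemma recolor_component_colorings:
  assumes c: "c \<in> colorings V C R" and u: "u \<in> V" and v: "v \<in> V" and RV: "R \<subseteq> V \<times> V"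
  shows "(\<lambda>w. if w \<in> V then if w \<in> component R v then c u else c w else undefined)
           \<in> colorings V C (insert (u, v) R)"
proof -
  have cP: "c \<in> V \<rightarrow>\<^sub>E C" and cR: "\<forall>(a, b)\<in>R. c a = c b" using c unfolding colorings_def by auto
  have vK: "v \<in> component R v" unfolding component_def by simp
  show ?thesis unfolding colorings_def
  proof (intro CollectI conjI ballI)
    show "(\<lambda>w. if w \<in> V then if w \<in> component R v then c u else c w else undefined) \<in> V \<rightarrow>\<^sub>E C"
      using cP u by auto
  next
    fix ab assume "ab \<in> insert (u, v) R"
    then consider "ab = (u, v)" | a b where "ab = (a, b)" "(a, b) \<in> R" by (cases ab) auto
    then show "case ab of (a, b) \<Rightarrow>
      (if a \<in> V then if a \<in> component R v then c u else c a else undefined) =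
      (if b \<in> V then if b \<in> component R v then c u else c b else undefined)"
    proof cases
      case 1 then show ?thesis using u v vK by auto
    next
      case (2 a b)
      have "a \<in> V" "b \<in> V" "c a = c b" using RV cR 2(2) by auto
      moreover have "a \<in> component R v \<longleftrightarrow> b \<in> component R v" by (rule component_closed[OF 2(2)])
      ultimately show ?thesis using 2(1) by simp
    qed
  qed
qed

text \<open>Recolouring the component of \<open>v\<close> with the colour of \<open>u\<close> loses only the colour of \<open>v\<close>.\<close>

lemma card_colorings_le_insert:
  assumes fV: "finite V" and fC: "finite C" and u: "u \<in> V" and v: "v \<in> V" and RV: "R \<subseteq> V \<times> V"
  shows "card (colorings V C R) \<le> card C * card (colorings V C (insert (u, v) R))"
proof -
  let ?K = "component R v"
  define f where "f c = (c v, \<lambda>w. if w \<in> V then if w \<in> ?K then c u else c w else undefined)"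
    for c :: "'a \<Rightarrow> 'b"
  have img: "f ` colorings V C R \<subseteq> C \<times> colorings V C (insert (u, v) R)"
  proof
    fix y assume "y \<in> f ` colorings V C R"
    then obtain c where c: "c \<in> colorings V C R" and y: "y = f c" by blast
    have "c v \<in> C" using c v unfolding colorings_def by auto
    then show "y \<in> C \<times> colorings V C (insert (u, v) R)"
      using recolor_component_colorings[OF c u v RV] unfolding y f_def by simp
  qed
  have inj: "inj_on f (colorings V C R)"
  proof (rule inj_onI)
    fix c1 c2 assume c1: "c1 \<in> colorings V C R" and c2: "c2 \<in> colorings V C R" and eq: "f c1 = f c2"
    show "c1 = c2"
    proof
      fix w
      consider "w \<notin> V" | "w \<in> V" "w \<in> ?K" | "w \<in> V" "w \<notin> ?K" by blast
      then show "c1 w = c2 w"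
      proof cases
        case 1 then show ?thesis using c1 c2 unfolding colorings_def by (auto simp: PiE_def extensional_def)
      next
        case 2
        have "c1 v = c2 v" using arg_cong[OF eq, of fst] unfolding f_def by simp
        then show ?thesis
          using coloring_const_on_component[OF c1 2(2)] coloring_const_on_component[OF c2 2(2)] by simp
      next
        case 3
        have "snd (f c1) w = snd (f c2) w" using eq by simp
        with 3 show ?thesis unfolding f_def by simp
      qed
    qed
  qed
  have "card (colorings V C R) \<le> card (C \<times> colorings V C (insert (u, v) R))"
    by (rule card_inj_on_le[OF inj img]) (simp add: fC finite_colorings[OF fV fC])
  then show ?thesis by (simp add: card_cartesian_product)
qed

lemma card_colorings_le_union:
  assumes fV: "finite V" and fC: "finite C" and fP: "finite P"
    and PV: "P \<subseteq> V \<times> V" and RV: "R \<subseteq> V \<times> V"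
  shows "card (colorings V C R) \<le> card C ^ card P * card (colorings V C (P \<union> R))"
  using fP PV
proof (induction P rule: finite_induct)
  case (insert x P)
  obtain u v where x: "x = (u, v)" by force
  have "card (colorings V C R) \<le> card C ^ card P * card (colorings V C (P \<union> R))"
    using insert by auto
  also have "card (colorings V C (P \<union> R)) \<le> card C * card (colorings V C (insert (u, v) (P \<union> R)))"
    by (rule card_colorings_le_insert[OF fV fC]) (use insert x RV in auto)
  finally have "card (colorings V C R)
      \<le> card C ^ card P * (card C * card (colorings V C (insert (u, v) (P \<union> R))))"
    by (simp add: mult_left_mono)
  then show ?case using insert x by (simp add: algebra_simps)
qed simp

section \<open>Symmetric matrices acting on \<open>\<real>\<^sup>N\<close>\<close>

text \<open>A vector of \<open>\<real>\<^sup>N\<close> is a function \<open>nat \<Rightarrow> real\<close> vanishing from \<open>N\<close> on, a matrix is a kernel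
  \<open>nat \<Rightarrow> nat \<Rightarrow> real\<close> of which only the \<open>N \<times> N\<close> corner matters. Vectors then carry the product
  topology, in which the unit sphere is compact.\<close>

definition dot :: "nat \<Rightarrow> (nat \<Rightarrow> real) \<Rightarrow> (nat \<Rightarrow> real) \<Rightarrow> real" where
  "dot N x y = (\<Sum>i<N. x i * y i)"

definition mat_app :: "nat \<Rightarrow> (nat \<Rightarrow> nat \<Rightarrow> real) \<Rightarrow> (nat \<Rightarrow> real) \<Rightarrow> nat \<Rightarrow> real" where
  "mat_app N M x = (\<lambda>i. if i < N then \<Sum>j<N. M i j * x j else 0)"

definition quad_form :: "nat \<Rightarrow> (nat \<Rightarrow> nat \<Rightarrow> real) \<Rightarrow> (nat \<Rightarrow> real) \<Rightarrow> real" where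
  "quad_form N M x = dot N x (mat_app N M x)"

definition vanish_from :: "nat \<Rightarrow> (nat \<Rightarrow> real) set" where
  "vanish_from N = {x. \<forall>i\<ge>N. x i = 0}"

definition symmetric_kernel :: "nat \<Rightarrow> (nat \<Rightarrow> nat \<Rightarrow> real) \<Rightarrow> bool" where
  "symmetric_kernel N M \<longleftrightarrow> (\<forall>i<N. \<forall>j<N. M i j = M j i)"

definition lin_closed :: "(nat \<Rightarrow> real) set \<Rightarrow> bool" where
  "lin_closed W \<longleftrightarrow> (\<forall>x\<in>W. \<forall>y\<in>W. \<forall>c. (\<lambda>i. x i + c * y i) \<in> W) \<and> (\<forall>x\<in>W. \<forall>c. (\<lambda>i. c * x i) \<in> W)"

definition eigenvecs :: "nat \<Rightarrow> (nat \<Rightarrow> nat \<Rightarrow> real) \<Rightarrow> real \<Rightarrow> (nat \<Rightarrow> real) set" where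
  "eigenvecs N M l = {g \<in> vanish_from N. mat_app N M g = (\<lambda>i. l * g i)}"

definition perp :: "nat \<Rightarrow> (nat \<Rightarrow> real) set \<Rightarrow> (nat \<Rightarrow> real) set" where
  "perp N G = {x \<in> vanish_from N. \<forall>g\<in>G. dot N x g = 0}"

fun kernel_pow :: "nat \<Rightarrow> (nat \<Rightarrow> nat \<Rightarrow> real) \<Rightarrow> nat \<Rightarrow> nat \<Rightarrow> nat \<Rightarrow> real" where
  "kernel_pow N M 0 i j = (if i = j then 1 else 0)"
| "kernel_pow N M (Suc k) i j = (\<Sum>l<N. M i l * kernel_pow N M k l j)"

lemma dot_sym: "dot N x y = dot N y x"
  unfolding dot_def by (simp add: mult.commute)

lemma dot_add_left: "dot N (\<lambda>i. x i + c * y i) z = dot N x z + c * dot N y z"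
  unfolding dot_def by (simp add: algebra_simps sum.distrib sum_distrib_left)

lemma dot_add_right: "dot N z (\<lambda>i. x i + c * y i) = dot N z x + c * dot N z y"
  unfolding dot_def by (simp add: algebra_simps sum.distrib sum_distrib_left)

lemma dot_scale_left: "dot N (\<lambda>i. c * x i) z = c * dot N x z"
  unfolding dot_def by (simp add: algebra_simps sum_distrib_left)

lemma dot_scale_right: "dot N z (\<lambda>i. c * x i) = c * dot N z x"
  unfolding dot_def by (simp add: algebra_simps sum_distrib_left)

lemma dot_self_nonneg: "dot N x x \<ge> 0"
  unfolding dot_def by (auto intro: sum_nonneg)

lemma dot_self_eq_0_iff: "dot N x x = 0 \<longleftrightarrow> (\<forall>i<N. x i = 0)"
  unfolding dot_def using sum_nonneg_eq_0_iff[of "{..<N}" "\<lambda>i. x i * x i"] by auto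

lemma dot_self_eq_0_vanish_from: "x \<in> vanish_from N \<Longrightarrow> dot N x x = 0 \<longleftrightarrow> x = (\<lambda>_. 0)"
  unfolding dot_self_eq_0_iff vanish_from_def by (auto simp: not_le[symmetric])

lemma mat_app_vanish_from: "mat_app N M x \<in> vanish_from N"
  unfolding mat_app_def vanish_from_def by auto

lemma mat_app_add: "mat_app N M (\<lambda>i. x i + c * y i) = (\<lambda>i. mat_app N M x i + c * mat_app N M y i)"
  unfolding mat_app_def by (auto simp: algebra_simps sum.distrib sum_distrib_left)

lemma mat_app_scale: "mat_app N M (\<lambda>i. c * x i) = (\<lambda>i. c * mat_app N M x i)"
  unfolding mat_app_def by (auto simp: algebra_simps sum_distrib_left)

lemma quad_form_expand: "quad_form N M x = (\<Sum>i<N. \<Sum>j<N. x i * M i j * x j)"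
  unfolding quad_form_def dot_def mat_app_def by (intro sum.cong refl) (simp add: sum_distrib_left mult.assoc)

lemma mat_app_adjoint:
  assumes "symmetric_kernel N M"
  shows "dot N x (mat_app N M y) = dot N (mat_app N M x) y"
proof -
  have "dot N x (mat_app N M y) = (\<Sum>i<N. \<Sum>j<N. x i * M i j * y j)"
    unfolding dot_def mat_app_def by (intro sum.cong refl) (simp add: sum_distrib_left mult.assoc)
  also have "\<dots> = (\<Sum>j<N. \<Sum>i<N. x i * M i j * y j)" by (rule sum.swap)
  also have "\<dots> = (\<Sum>j<N. (\<Sum>i<N. M j i * x i) * y j)"
    using assms unfolding symmetric_kernel_def
    by (intro sum.cong refl) (auto simp: sum_distrib_left sum_distrib_right ac_simps intro!: sum.cong)
  also have "\<dots> = dot N (mat_app N M x) y"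
    unfolding dot_def mat_app_def by simp
  finally show ?thesis .
qed

lemma quad_form_scale: "quad_form N M (\<lambda>i. c * x i) = c\<^sup>2 * quad_form N M x"
  unfolding quad_form_def mat_app_scale dot_scale_left dot_scale_right by (simp add: power2_eq_square)

lemma dot_scale_self: "dot N (\<lambda>i. c * x i) (\<lambda>i. c * x i) = c\<^sup>2 * dot N x x"
  unfolding dot_scale_left dot_scale_right by (simp add: power2_eq_square)

lemma quad_form_eigenvector: "mat_app N M v = (\<lambda>i. m * v i) \<Longrightarrow> quad_form N M v = m * dot N v v"
  unfolding quad_form_def by (simp add: dot_scale_right)

lemma lin_closed_vanish_from: "lin_closed (vanish_from N)"
  unfolding lin_closed_def vanish_from_def by auto

lemma continuous_on_coordinate: "continuous_on UNIV (\<lambda>x::nat \<Rightarrow> real. x i)"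
  by simp

lemma closed_vanish_from: "closed (vanish_from N)"
proof -
  have "vanish_from N = (\<Inter>i\<in>{N..}. {x. x i = 0})" unfolding vanish_from_def by auto
  moreover have "closed {x::nat\<Rightarrow>real. x i = 0}" for i
    by (rule closed_Collect_eq) (auto intro: continuous_on_coordinate)
  ultimately show ?thesis by auto
qed

lemma continuous_on_quad_form: "continuous_on UNIV (quad_form N M)"
  unfolding quad_form_expand by (intro continuous_intros continuous_on_coordinate)

lemma continuous_on_dot_const: "continuous_on UNIV (\<lambda>x. dot N x g)"
  unfolding dot_def by (intro continuous_intros continuous_on_coordinate)

lemma continuous_on_dot_self: "continuous_on UNIV (\<lambda>x. dot N x x)"
  unfolding dot_def by (intro continuous_intros continuous_on_coordinate)

lemma compact_unit_cube:
  "compact (Pi\<^sub>E UNIV (\<lambda>i. if i < N then {-1..1::real} else {0}))"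
proof -
  have "compactin (product_topology (\<lambda>i. euclidean) UNIV)
      (Pi\<^sub>E UNIV (\<lambda>i. if i < N then {-1..1::real} else {0}))"
    by (subst compactin_PiE) auto
  then show ?thesis by (simp add: euclidean_product_topology)
qed

lemma exists_max_on_unit_sphere:
  fixes f :: "(nat \<Rightarrow> real) \<Rightarrow> real"
  assumes W: "closed W" "W \<subseteq> vanish_from N" and ex: "\<exists>x\<in>W. dot N x x = 1"
    and f: "continuous_on UNIV f"
  shows "\<exists>w\<in>W. dot N w w = 1 \<and> (\<forall>x\<in>W. dot N x x = 1 \<longrightarrow> f x \<le> f w)"
proof -
  let ?K = "Pi\<^sub>E UNIV (\<lambda>i. if i < N then {-1..1::real} else {0})"
  let ?S = "W \<inter> {x. dot N x x = 1}"
  have "x i \<in> (if i < N then {-1..1} else {0})" if x: "x \<in> ?S" for x i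
  proof (cases "i < N")
    case True
    have "x i * x i \<le> (\<Sum>j<N. x j * x j)"
      by (rule member_le_sum[of i "{..<N}" "\<lambda>j. x j * x j"]) (use True in auto)
    then have "\<bar>x i\<bar> \<le> 1"
      using x abs_square_le_1[of "x i"] unfolding dot_def by (simp add: power2_eq_square)
    then show ?thesis using True by auto
  next
    case False then show ?thesis using x W unfolding vanish_from_def by auto
  qed
  then have sub: "?S \<subseteq> ?K" by auto
  have "closed ?S"
    using continuous_on_dot_self[of N] by (intro closed_Int W(1) closed_Collect_eq) auto
  then have "compact (?K \<inter> ?S)" by (rule compact_Int_closed[OF compact_unit_cube])
  then have cS: "compact ?S" using sub by (simp add: Int_absorb1)
  have ne: "?S \<noteq> {}" using ex by auto
  obtain w where "w \<in> ?S" "\<forall>y\<in>?S. f y \<le> f w"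
    using continuous_attains_sup[OF cS ne continuous_on_subset[OF f subset_UNIV]] by auto
  then show ?thesis by auto
qed

lemma linear_coeff_eq_0:
  fixes a b :: real
  assumes h: "\<And>t. 2 * t * a + t\<^sup>2 * b \<le> 0"
  shows "a = 0"
proof -
  define c where "c = \<bar>b\<bar> + 1"
  have c: "c > 0" "2 * c + b > 0" unfolding c_def by auto
  have "c\<^sup>2 * (2 * (a / c) * a + (a / c)\<^sup>2 * b) \<le> 0"
    using h[of "a / c"] by (simp add: mult_nonneg_nonpos)
  also have "c\<^sup>2 * (2 * (a / c) * a + (a / c)\<^sup>2 * b) = a\<^sup>2 * (2 * c + b)"
    using c by (simp add: power2_eq_square field_simps)
  finally have "a\<^sup>2 \<le> 0" using c by (simp add: mult_le_0_iff)
  then show ?thesis by simp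
qed

lemma rayleigh_bound_of_max:
  assumes W: "lin_closed W" and w: "w \<in> W" "dot N w w = 1"
    and wmax: "\<forall>x\<in>W. dot N x x = 1 \<longrightarrow> quad_form N M x \<le> quad_form N M w"
    and x: "x \<in> W"
  shows "quad_form N M x \<le> quad_form N M w * dot N x x"
proof (cases "dot N x x = 0")
  case True then show ?thesis using dot_self_eq_0_iff[of N x] by (simp add: quad_form_expand)
next
  case False
  then have pos: "dot N x x > 0" using dot_self_nonneg[of N x] by simp
  define s where "s = 1 / sqrt (dot N x x)"
  have s2: "s\<^sup>2 * dot N x x = 1" unfolding s_def using pos by (simp add: power_divide)
  have "(\<lambda>i. s * x i) \<in> W" using W x unfolding lin_closed_def by auto
  moreover have "dot N (\<lambda>i. s * x i) (\<lambda>i. s * x i) = 1" using s2 by (simp add: dot_scale_self)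
  ultimately have "quad_form N M (\<lambda>i. s * x i) \<le> quad_form N M w" using wmax by blast
  then have "s\<^sup>2 * quad_form N M x \<le> quad_form N M w" by (simp add: quad_form_scale)
  then have "s\<^sup>2 * quad_form N M x * dot N x x \<le> quad_form N M w * dot N x x"
    using pos by (simp add: mult_right_mono)
  moreover have "s\<^sup>2 * quad_form N M x * dot N x x = quad_form N M x * (s\<^sup>2 * dot N x x)"
    by (simp only: mult_ac)
  ultimately show ?thesis using s2 by simp
qed

text \<open>First-order optimality: the directional derivative of the Rayleigh quotient at a
  maximiser vanishes, and for the direction \<open>M w - l w\<close> this forces \<open>M w = l w\<close>.\<close>

lemma rayleigh_bound_eigenvector:
  assumes sym: "symmetric_kernel N M" and W: "W \<subseteq> vanish_from N" "lin_closed W"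
    and inv: "\<forall>x\<in>W. mat_app N M x \<in> W" and w: "w \<in> W" "dot N w w = 1"
    and bound: "\<forall>x\<in>W. quad_form N M x \<le> quad_form N M w * dot N x x"
  shows "mat_app N M w = (\<lambda>i. quad_form N M w * w i)"
proof -
  let ?l = "quad_form N M w"
  have deriv: "dot N y (mat_app N M w) - ?l * dot N y w = 0" if y: "y \<in> W" for y
  proof (rule linear_coeff_eq_0)
    fix t
    let ?z = "\<lambda>i. w i + t * y i"
    have "?z \<in> W" using W(2) w y unfolding lin_closed_def by auto
    then have "quad_form N M ?z \<le> ?l * dot N ?z ?z" using bound by blast
    moreover have "dot N w (mat_app N M y) = dot N y (mat_app N M w)"
      using mat_app_adjoint[OF sym, of w y] dot_sym by simp
    ultimately show "2 * t * (dot N y (mat_app N M w) - ?l * dot N y w)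
        + t\<^sup>2 * (quad_form N M y - ?l * dot N y y) \<le> 0"
      unfolding quad_form_def mat_app_add dot_add_left dot_add_right
      using w(2) dot_sym[of N w y] by (simp add: power2_eq_square algebra_simps)
  qed
  let ?y = "\<lambda>i. mat_app N M w i + (- ?l) * w i"
  have "mat_app N M w \<in> W" using inv w(1) by blast
  then have yW: "?y \<in> W" using W(2) w(1) unfolding lin_closed_def by blast
  have "dot N ?y ?y = dot N ?y (mat_app N M w) - ?l * dot N ?y w"
    unfolding dot_add_right by simp
  then have "dot N ?y ?y = 0" using deriv[OF yW] by simp
  then have y0: "?y = (\<lambda>_. 0)" using dot_self_eq_0_vanish_from yW W(1) by blast
  show ?thesis
  proof
    fix i
    have "mat_app N M w i + (- ?l) * w i = 0" using fun_cong[OF y0] by simp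
    then show "mat_app N M w i = ?l * w i" by simp
  qed
qed

lemma rayleigh_max_eigenvector:
  assumes sym: "symmetric_kernel N M" and W: "closed W" "W \<subseteq> vanish_from N" "lin_closed W"
    and inv: "\<forall>x\<in>W. mat_app N M x \<in> W" and ex: "\<exists>x\<in>W. dot N x x = 1"
  shows "\<exists>w\<in>W. dot N w w = 1 \<and> mat_app N M w = (\<lambda>i. quad_form N M w * w i)
           \<and> (\<forall>x\<in>W. quad_form N M x \<le> quad_form N M w * dot N x x)"
proof -
  obtain w where w: "w \<in> W" "dot N w w = 1"
    and wmax: "\<forall>x\<in>W. dot N x x = 1 \<longrightarrow> quad_form N M x \<le> quad_form N M w"
    using exists_max_on_unit_sphere[OF W(1,2) ex continuous_on_quad_form] by blast
  have bound: "\<forall>x\<in>W. quad_form N M x \<le> quad_form N M w * dot N x x"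
    using rayleigh_bound_of_max[OF W(3) w wmax] by blast
  show ?thesis
    using w bound rayleigh_bound_eigenvector[OF sym W(2,3) inv w bound] by (intro bexI[of _ w]) auto
qed

lemma kernel_pow_Suc_right:
  "i < N \<Longrightarrow> j < N \<Longrightarrow> kernel_pow N M (Suc k) i j = (\<Sum>l<N. kernel_pow N M k i l * M l j)"
proof (induction k arbitrary: i)
  case 0
  then show ?case by (simp add: if_distrib[of "\<lambda>x. _ * x"] if_distrib[of "\<lambda>x. x * _"] cong: if_cong)
next
  case (Suc k)
  have "kernel_pow N M (Suc (Suc k)) i j = (\<Sum>l<N. M i l * (\<Sum>m<N. kernel_pow N M k l m * M m j))"
    using Suc by simp
  also have "\<dots> = (\<Sum>m<N. (\<Sum>l<N. M i l * kernel_pow N M k l m) * M m j)"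
    by (simp add: sum_distrib_left sum_distrib_right mult.assoc) (rule sum.swap)
  finally show ?case by simp
qed

lemma kernel_pow_add:
  "i < N \<Longrightarrow> j < N \<Longrightarrow> kernel_pow N M (a + b) i j = (\<Sum>l<N. kernel_pow N M a i l * kernel_pow N M b l j)"
proof (induction a arbitrary: i)
  case 0
  then show ?case by (simp add: if_distrib[of "\<lambda>x. x * _"] cong: if_cong)
next
  case (Suc a)
  have "kernel_pow N M (Suc a + b) i j = (\<Sum>m<N. \<Sum>l<N. M i m * kernel_pow N M a m l * kernel_pow N M b l j)"
    using Suc by (simp add: sum_distrib_left mult.assoc)
  also have "\<dots> = (\<Sum>l<N. \<Sum>m<N. M i m * kernel_pow N M a m l * kernel_pow N M b l j)" by (rule sum.swap)
  finally show ?case by (simp add: sum_distrib_right)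
qed

lemma symmetric_kernel_pow: "symmetric_kernel N M \<Longrightarrow> symmetric_kernel N (kernel_pow N M k)"
  unfolding symmetric_kernel_def
proof (induction k)
  case (Suc k)
  show ?case
  proof (intro allI impI)
    fix i j assume "i < N" "j < N"
    then have "kernel_pow N M (Suc k) j i = (\<Sum>l<N. kernel_pow N M k j l * M l i)"
      by (simp only: kernel_pow_Suc_right)
    also have "\<dots> = kernel_pow N M (Suc k) i j"
      using Suc \<open>i < N\<close> \<open>j < N\<close> by (auto simp: mult.commute intro!: sum.cong)
    finally show "kernel_pow N M (Suc k) i j = kernel_pow N M (Suc k) j i" by simp
  qed
qed simp

lemma iterate_vanish_from: "x \<in> vanish_from N \<Longrightarrow> (mat_app N M ^^ k) x \<in> vanish_from N"
  by (induction k) (auto simp: mat_app_vanish_from)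

lemma kernel_pow_apply:
  "i < N \<Longrightarrow> x \<in> vanish_from N \<Longrightarrow> (\<Sum>j<N. kernel_pow N M k i j * x j) = (mat_app N M ^^ k) x i"
proof (induction k arbitrary: i)
  case 0
  then show ?case by (simp add: if_distrib[of "\<lambda>y. y * _"] cong: if_cong)
next
  case (Suc k)
  have "(\<Sum>j<N. kernel_pow N M (Suc k) i j * x j) = (\<Sum>l<N. \<Sum>j<N. M i l * kernel_pow N M k l j * x j)"
    by (simp add: sum_distrib_right mult.assoc) (rule sum.swap)
  also have "\<dots> = (\<Sum>l<N. M i l * (mat_app N M ^^ k) x l)"
    using Suc by (simp add: sum_distrib_left[symmetric] mult.assoc)
  also have "\<dots> = (mat_app N M ^^ Suc k) x i" using Suc.prems by (simp add: mat_app_def)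
  finally show ?case .
qed

lemma mat_app_kernel_pow:
  assumes "x \<in> vanish_from N"
  shows "mat_app N (kernel_pow N M k) x = (mat_app N M ^^ k) x"
proof
  fix i
  show "mat_app N (kernel_pow N M k) x i = (mat_app N M ^^ k) x i"
  proof (cases "i < N")
    case True then show ?thesis using kernel_pow_apply[OF True assms] by (simp add: mat_app_def)
  next
    case False then show ?thesis
      using iterate_vanish_from[OF assms, where M=M and k=k] unfolding mat_app_def vanish_from_def by simp
  qed
qed

lemma mat_app_kernel_pow_2:
  "x \<in> vanish_from N \<Longrightarrow> mat_app N (kernel_pow N M 2) x = mat_app N M (mat_app N M x)"
  using mat_app_kernel_pow[of x N M 2] by (simp add: numeral_2_eq_2)

lemma moment_kernel_pow:
  assumes "x \<in> vanish_from N"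
  shows "(\<Sum>i<N. \<Sum>j<N. x i * kernel_pow N M k i j * x j) = dot N x ((mat_app N M ^^ k) x)"
  unfolding dot_def using kernel_pow_apply[OF _ assms]
  by (simp add: sum_distrib_left[symmetric] mult.assoc)

lemma dot_iterate_adjoint:
  assumes "symmetric_kernel N M"
  shows "dot N ((mat_app N M ^^ a) x) ((mat_app N M ^^ b) y) = dot N x ((mat_app N M ^^ (a + b)) y)"
proof (induction a arbitrary: b)
  case (Suc a)
  have "dot N ((mat_app N M ^^ Suc a) x) ((mat_app N M ^^ b) y)
      = dot N ((mat_app N M ^^ a) x) ((mat_app N M ^^ Suc b) y)"
    using mat_app_adjoint[OF assms, of "(mat_app N M ^^ a) x" "(mat_app N M ^^ b) y"] by simp
  also have "\<dots> = dot N x ((mat_app N M ^^ (a + Suc b)) y)" by (rule Suc.IH)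
  finally show ?case by simp
qed simp

lemma iterate_eigenvector:
  "mat_app N M w = (\<lambda>i. l * w i) \<Longrightarrow> (mat_app N M ^^ k) w = (\<lambda>i. l ^ k * w i)"
  by (induction k) (auto simp: mat_app_scale)

text \<open>\<open>tr M\<^sup>2\<^sup>k\<close> is the sum of the squared entries of \<open>M\<^sup>k\<close>, which by Cauchy--Schwarz dominates
  \<open>|M\<^sup>k w|\<^sup>2 = l\<^sup>2\<^sup>k\<close> for a unit eigenvector \<open>w\<close>.\<close>

lemma trace_kernel_pow_ge:
  assumes sym: "symmetric_kernel N M" and w: "w \<in> vanish_from N" "dot N w w = 1"
    and eig: "mat_app N M w = (\<lambda>i. l * w i)"
  shows "l ^ (2 * k) \<le> (\<Sum>i<N. kernel_pow N M (k + k) i i)"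
proof -
  have e: "l ^ (2 * k) = l ^ k * l ^ k" by (simp add: mult_2 power_add)
  have "(\<Sum>i<N. ((mat_app N M ^^ k) w i)\<^sup>2) = (\<Sum>i<N. l ^ (2 * k) * (w i * w i))"
    unfolding iterate_eigenvector[OF eig] e by (intro sum.cong refl) (simp add: power2_eq_square algebra_simps)
  also have "\<dots> = l ^ (2 * k)" using w(2) unfolding dot_def by (simp add: sum_distrib_left[symmetric])
  finally have "l ^ (2 * k) = (\<Sum>i<N. ((mat_app N M ^^ k) w i)\<^sup>2)" ..
  also have "\<dots> \<le> (\<Sum>i<N. \<Sum>j<N. (kernel_pow N M k i j)\<^sup>2)"
  proof (rule sum_mono)
    fix i assume i: "i \<in> {..<N}"
    have "((mat_app N M ^^ k) w i)\<^sup>2 = (\<Sum>j<N. kernel_pow N M k i j * w j)\<^sup>2"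
      using kernel_pow_apply[of i N w M k] i w by simp
    also have "\<dots> \<le> (\<Sum>j<N. (kernel_pow N M k i j)\<^sup>2) * (\<Sum>j<N. (w j)\<^sup>2)"
      by (rule Cauchy_Schwarz_ineq_sum)
    finally show "((mat_app N M ^^ k) w i)\<^sup>2 \<le> (\<Sum>j<N. (kernel_pow N M k i j)\<^sup>2)"
      using w(2) unfolding dot_def by (simp add: power2_eq_square)
  qed
  also have "\<dots> = (\<Sum>i<N. kernel_pow N M (k + k) i i)"
    using symmetric_kernel_pow[OF sym, of k] kernel_pow_add[of _ N _ M k k]
    unfolding symmetric_kernel_def by (auto simp: power2_eq_square intro!: sum.cong)
  finally show ?thesis .
qed

lemma top_eigenpair:
  assumes sym: "symmetric_kernel N M" and N: "N > 0"
  obtains l w where "w \<in> vanish_from N" "dot N w w = 1" "mat_app N M w = (\<lambda>i. l * w i)"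
    "\<forall>x\<in>vanish_from N. quad_form N M x \<le> l * dot N x x"
proof -
  have "(\<lambda>i. if i = 0 then 1 else 0) \<in> vanish_from N" using N unfolding vanish_from_def by auto
  moreover have "dot N (\<lambda>i. if i = 0 then 1 else 0) (\<lambda>i. if i = 0 then 1 else 0) = 1"
    using N unfolding dot_def by (simp add: if_distrib cong: if_cong)
  ultimately have "\<exists>x\<in>vanish_from N. dot N x x = 1" by blast
  then obtain w where "w \<in> vanish_from N" "dot N w w = 1"
    "mat_app N M w = (\<lambda>i. quad_form N M w * w i)"
    "\<forall>x\<in>vanish_from N. quad_form N M x \<le> quad_form N M w * dot N x x"
    using rayleigh_max_eigenvector[OF sym closed_vanish_from order_refl lin_closed_vanish_from]
      mat_app_vanish_from by blast
  then show ?thesis by (rule that)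
qed

lemma eigenvalue_le_rayleigh_bound:
  assumes bound: "\<forall>x\<in>vanish_from N. quad_form N M x \<le> l * dot N x x"
    and v: "v \<in> vanish_from N" "dot N v v \<noteq> 0" "mat_app N M v = (\<lambda>i. m * v i)"
  shows "m \<le> l"
proof -
  have "quad_form N M v \<le> l * dot N v v" using bound v(1) by blast
  then have "m * dot N v v \<le> l * dot N v v" unfolding quad_form_eigenvector[OF v(3)] .
  moreover have "dot N v v > 0" using v(2) dot_self_nonneg[of N v] by simp
  ultimately show ?thesis by simp
qed

lemma perp_subset: "perp N G \<subseteq> vanish_from N"
  unfolding perp_def by auto

lemma lin_closed_perp: "lin_closed (perp N G)"
  unfolding lin_closed_def perp_def vanish_from_def by (auto simp: dot_add_left dot_scale_left)

lemma closed_perp: "closed (perp N G)"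
proof -
  have "perp N G = vanish_from N \<inter> (\<Inter>g\<in>G. {x. dot N x g = 0})" unfolding perp_def by auto
  moreover have "closed {x. dot N x g = 0}" for g
    by (rule closed_Collect_eq) (auto intro: continuous_on_dot_const)
  ultimately show ?thesis by (simp add: closed_Int closed_INT closed_vanish_from)
qed

lemma perp_eigenvecs_invariant:
  assumes sym: "symmetric_kernel N M" and x: "x \<in> perp N (eigenvecs N M l)"
  shows "mat_app N M x \<in> perp N (eigenvecs N M l)"
  unfolding perp_def
proof (intro CollectI conjI mat_app_vanish_from ballI)
  fix g assume g: "g \<in> eigenvecs N M l"
  have "dot N (mat_app N M x) g = dot N x (mat_app N M g)" using mat_app_adjoint[OF sym] by simp
  also have "\<dots> = l * dot N x g" using g unfolding eigenvecs_def by (simp add: dot_scale_right)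
  finally show "dot N (mat_app N M x) g = 0" using x g unfolding perp_def by simp
qed

lemma eigenvecs_perp_self: "g \<in> eigenvecs N M l \<Longrightarrow> g \<in> perp N (eigenvecs N M l) \<Longrightarrow> dot N g g = 0"
  unfolding perp_def by blast

lemma square_root_eigenvector:
  assumes "mat_app N M (mat_app N M w) = (\<lambda>i. s\<^sup>2 * w i)"
  shows "mat_app N M (\<lambda>i. mat_app N M w i + s * w i) = (\<lambda>i. s * (mat_app N M w i + s * w i))"
  unfolding mat_app_add assms by (simp add: power2_eq_square algebra_simps)

text \<open>On the orthogonal complement of the top eigenspace of a positive semidefinite \<open>M\<close>, the top
  eigenvalue of \<open>M\<^sup>2\<close> is strictly smaller than \<open>l\<^sup>2\<close>: a square root \<open>s \<ge> l\<close> of it would give the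
  eigenvector \<open>M w + s w\<close> of eigenvalue \<open>s\<close>, or, if that vanishes, the eigenvalue \<open>-s\<close> of \<open>w\<close>.\<close>

lemma square_rayleigh_below_top:
  assumes sym: "symmetric_kernel N M" and psd: "\<And>x. quad_form N M x \<ge> 0"
    and bound: "\<forall>x\<in>vanish_from N. quad_form N M x \<le> l * dot N x x"
    and w: "w \<in> perp N (eigenvecs N M l)" "dot N w w = 1"
    and eig: "mat_app N M (mat_app N M w) = (\<lambda>i. m * w i)"
  shows "m < l\<^sup>2"
proof (rule ccontr)
  assume "\<not> m < l\<^sup>2"
  let ?G = "eigenvecs N M l"
  have wZ: "w \<in> vanish_from N" using w(1) perp_subset by blast
  have "m = dot N (mat_app N M w) (mat_app N M w)"
    using mat_app_adjoint[OF sym, of w "mat_app N M w"] w(2) eig by (simp add: dot_scale_right)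
  then have "m \<ge> 0" by (simp add: dot_self_nonneg)
  define s where "s = sqrt m"
  have s: "s \<ge> 0" "s\<^sup>2 = m" "l \<le> s"
    using \<open>m \<ge> 0\<close> \<open>\<not> m < l\<^sup>2\<close> real_le_rsqrt unfolding s_def by (auto simp: not_less)
  define u where "u = (\<lambda>i. mat_app N M w i + s * w i)"
  have uG: "u \<in> perp N ?G"
    using lin_closed_perp perp_eigenvecs_invariant[OF sym w(1)] w(1)
    unfolding u_def lin_closed_def by blast
  then have uZ: "u \<in> vanish_from N" using perp_subset by blast
  have Mu: "mat_app N M u = (\<lambda>i. s * u i)"
    unfolding u_def by (rule square_root_eigenvector) (use eig s(2) in simp)
  show False
  proof (cases "dot N u u = 0")
    case False
    then have "s = l" using eigenvalue_le_rayleigh_bound[OF bound uZ False Mu] s(3) by simp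
    then have "u \<in> ?G" using uZ Mu unfolding eigenvecs_def by simp
    then show False using eigenvecs_perp_self uG False by blast
  next
    case True
    then have "u = (\<lambda>_. 0)" using dot_self_eq_0_vanish_from[OF uZ] by simp
    have Mw: "mat_app N M w = (\<lambda>i. (- s) * w i)"
    proof
      fix i
      have "mat_app N M w i + s * w i = 0" using fun_cong[OF \<open>u = (\<lambda>_. 0)\<close>, of i] unfolding u_def .
      then show "mat_app N M w i = (- s) * w i" by simp
    qed
    then have "- s \<ge> 0" using psd[of w] quad_form_eigenvector[OF Mw] w(2) by simp
    then have "l = 0" "s = 0" using s \<open>\<not> m < l\<^sup>2\<close> by auto
    then have "w \<in> ?G" using wZ Mw unfolding eigenvecs_def by simp
    then show False using eigenvecs_perp_self w by simp
  qed
qed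

lemma iterate_norm_decay:
  assumes sym: "symmetric_kernel N M" and W: "W \<subseteq> vanish_from N" "\<forall>x\<in>W. mat_app N M x \<in> W"
    and bound: "\<forall>x\<in>W. quad_form N (kernel_pow N M 2) x \<le> m * dot N x x" and m: "m \<ge> 0"
    and D: "D \<in> W"
  shows "dot N ((mat_app N M ^^ k) D) ((mat_app N M ^^ k) D) \<le> m ^ k * dot N D D"
proof (induction k)
  case (Suc k)
  let ?x = "(mat_app N M ^^ k) D"
  have xW: "?x \<in> W" using W(2) D by (induction k) auto
  have xZ: "?x \<in> vanish_from N" using W(1) xW by blast
  have "dot N ((mat_app N M ^^ Suc k) D) ((mat_app N M ^^ Suc k) D)
      = dot N ?x (mat_app N M (mat_app N M ?x))"
    using dot_iterate_adjoint[OF sym, of 1 ?x 1 ?x] by (simp add: numeral_2_eq_2)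
  also have "\<dots> = quad_form N (kernel_pow N M 2) ?x"
    unfolding quad_form_def mat_app_kernel_pow_2[OF xZ] ..
  also have "\<dots> \<le> m * dot N ?x ?x" using bound xW by blast
  also have "\<dots> \<le> m * (m ^ k * dot N D D)" using Suc m by (rule mult_left_mono)
  finally show ?case by simp
qed simp

lemma pow_le_smaller_pow_bounded:
  fixes a m K :: real
  assumes m: "0 \<le> m" "m < a" and le: "\<And>k. a ^ k \<le> K * m ^ k"
  shows False
proof -
  have a: "a > 0" using m by simp
  have K: "K > 0" using le[of 0] by simp
  obtain k where k: "(m / a) ^ k < 1 / K"
    using real_arch_pow_inv[of "1 / K" "m / a"] K m a by auto
  have "a ^ k \<le> K * ((m / a) ^ k * a ^ k)" using le[of k] a by (simp add: power_divide)
  also have "\<dots> < a ^ k" using k K a by (simp add: field_simps)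
  finally show False by simp
qed

lemma lin_closed_unit_vector:
  assumes W: "lin_closed W" and x: "x \<in> W" "dot N x x > 0"
  shows "\<exists>y\<in>W. dot N y y = 1"
proof
  define s where "s = 1 / sqrt (dot N x x)"
  show "dot N (\<lambda>i. s * x i) (\<lambda>i. s * x i) = 1"
    using x(2) unfolding dot_scale_self s_def by (simp add: power_divide)
  show "(\<lambda>i. s * x i) \<in> W" using W x(1) unfolding lin_closed_def by blast
qed

lemma square_bound_on_perp_top:
  assumes sym: "symmetric_kernel N M" and psd: "\<And>x. quad_form N M x \<ge> 0"
    and bound: "\<forall>x\<in>vanish_from N. quad_form N M x \<le> l * dot N x x"
    and ex: "\<exists>x\<in>perp N (eigenvecs N M l). dot N x x = 1"
  obtains m where "0 \<le> m" "m < l\<^sup>2"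
    "\<forall>x\<in>perp N (eigenvecs N M l). quad_form N (kernel_pow N M 2) x \<le> m * dot N x x"
proof -
  let ?W = "perp N (eigenvecs N M l)"
  let ?M2 = "kernel_pow N M 2"
  have "\<forall>x\<in>?W. mat_app N ?M2 x \<in> ?W"
  proof
    fix x assume x: "x \<in> ?W"
    then have "mat_app N ?M2 x = mat_app N M (mat_app N M x)"
      using perp_subset by (blast intro: mat_app_kernel_pow_2)
    then show "mat_app N ?M2 x \<in> ?W" using perp_eigenvecs_invariant[OF sym] x by simp
  qed
  then obtain w where w: "w \<in> ?W" "dot N w w = 1" "mat_app N ?M2 w = (\<lambda>i. quad_form N ?M2 w * w i)"
    and bound2: "\<forall>x\<in>?W. quad_form N ?M2 x \<le> quad_form N ?M2 w * dot N x x"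
    using rayleigh_max_eigenvector[OF symmetric_kernel_pow[OF sym] closed_perp perp_subset
        lin_closed_perp _ ex] by blast
  have wZ: "w \<in> vanish_from N" using w(1) perp_subset by blast
  have "mat_app N M (mat_app N M w) = (\<lambda>i. quad_form N ?M2 w * w i)"
    using w(3) unfolding mat_app_kernel_pow_2[OF wZ] .
  then have "quad_form N ?M2 w < l\<^sup>2" by (rule square_rayleigh_below_top[OF sym psd bound w(1,2)])
  moreover have "quad_form N ?M2 w = dot N (mat_app N M w) (mat_app N M w)"
    using mat_app_adjoint[OF sym, of w "mat_app N M w"]
    unfolding quad_form_def mat_app_kernel_pow_2[OF wZ] by simp
  ultimately show ?thesis using that bound2 dot_self_nonneg by metis
qed

text \<open>If \<open>D\<close> were orthogonal to the top eigenspace, \<open>\<langle>D, M\<^sup>2\<^sup>k D\<rangle>\<close> would grow like a power of the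
  top eigenvalue of \<open>M\<^sup>2\<close> on the complement, strictly slower than \<open>tr M\<^sup>2\<^sup>k \<ge> l\<^sup>2\<^sup>k\<close>.\<close>

lemma not_perp_top_eigenvecs:
  assumes sym: "symmetric_kernel N M" and psd: "\<And>x. quad_form N M x \<ge> 0"
    and D: "D \<in> vanish_from N" and N: "N > 0"
    and moments: "\<And>k. (\<Sum>i<N. kernel_pow N M k i i) \<le> C * (\<Sum>i<N. \<Sum>j<N. D i * kernel_pow N M k i j * D j)"
    and w0: "w0 \<in> vanish_from N" "dot N w0 w0 = 1" "mat_app N M w0 = (\<lambda>i. l * w0 i)"
    and bound: "\<forall>x\<in>vanish_from N. quad_form N M x \<le> l * dot N x x"
  shows "D \<notin> perp N (eigenvecs N M l)"
proof
  let ?W = "perp N (eigenvecs N M l)"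
  assume DW: "D \<in> ?W"
  have "real N \<le> C * dot N D D"
    using moments[of 0] unfolding dot_def by (simp add: if_distrib[of "\<lambda>x. _ * x * _"] cong: if_cong)
  then have "0 < C * dot N D D" using N by linarith
  then have C: "C > 0" and "dot N D D > 0"
    using dot_self_nonneg[of N D] by (auto simp: zero_less_mult_iff)
  then obtain m where m: "0 \<le> m" "m < l\<^sup>2"
    and bound2: "\<forall>x\<in>?W. quad_form N (kernel_pow N M 2) x \<le> m * dot N x x"
    using square_bound_on_perp_top[OF sym psd bound] lin_closed_unit_vector[OF lin_closed_perp DW]
    by blast
  have "(l\<^sup>2) ^ k \<le> (C * dot N D D) * m ^ k" for k
  proof -
    have "(l\<^sup>2) ^ k \<le> (\<Sum>i<N. kernel_pow N M (k + k) i i)"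
      using trace_kernel_pow_ge[OF sym w0] by (simp add: power_mult)
    also have "\<dots> \<le> C * dot N ((mat_app N M ^^ k) D) ((mat_app N M ^^ k) D)"
      using moments[of "k + k"] moment_kernel_pow[OF D] dot_iterate_adjoint[OF sym] by simp
    also have "\<dots> \<le> C * (m ^ k * dot N D D)"
      using iterate_norm_decay[OF sym perp_subset _ bound2 m(1) DW] perp_eigenvecs_invariant[OF sym] C
      by (intro mult_left_mono) auto
    finally show ?thesis by (simp add: ac_simps)
  qed
  then show False using pow_le_smaller_pow_bounded[OF m] by blast
qed

theorem top_eigenvector_overlap:
  assumes sym: "symmetric_kernel N M" and psd: "\<And>x. quad_form N M x \<ge> 0"
    and D: "D \<in> vanish_from N" and N: "N > 0"
    and moments: "\<And>k. (\<Sum>i<N. kernel_pow N M k i i) \<le> C * (\<Sum>i<N. \<Sum>j<N. D i * kernel_pow N M k i j * D j)"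
  shows "\<exists>l. (\<exists>w\<in>vanish_from N. dot N w w \<noteq> 0 \<and> mat_app N M w = (\<lambda>i. l * w i))
     \<and> (\<forall>m v. v \<in> vanish_from N \<longrightarrow> dot N v v \<noteq> 0 \<longrightarrow> mat_app N M v = (\<lambda>i. m * v i) \<longrightarrow> m \<le> l)
     \<and> (\<exists>v\<in>vanish_from N. dot N v v \<noteq> 0 \<and> mat_app N M v = (\<lambda>i. l * v i) \<and> dot N v D \<noteq> 0)"
proof -
  obtain l w0 where w0: "w0 \<in> vanish_from N" "dot N w0 w0 = 1" "mat_app N M w0 = (\<lambda>i. l * w0 i)"
    and bound: "\<forall>x\<in>vanish_from N. quad_form N M x \<le> l * dot N x x"
    using top_eigenpair[OF sym N] by blast
  obtain v where "v \<in> eigenvecs N M l" "dot N D v \<noteq> 0"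
    using not_perp_top_eigenvecs[OF sym psd D N moments w0 bound] D unfolding perp_def by blast
  moreover have "dot N v v \<noteq> 0"
  proof
    assume "dot N v v = 0"
    then have "dot N D v = 0" unfolding dot_self_eq_0_iff by (simp add: dot_def)
    with \<open>dot N D v \<noteq> 0\<close> show False by simp
  qed
  ultimately have "v \<in> vanish_from N" "dot N v v \<noteq> 0" "mat_app N M v = (\<lambda>i. l * v i)"
    "dot N v D \<noteq> 0"
    using dot_sym[of N D v] unfolding eigenvecs_def by auto
  then show ?thesis
  proof (intro exI[of _ l] conjI)
    show "\<exists>w\<in>vanish_from N. dot N w w \<noteq> 0 \<and> mat_app N M w = (\<lambda>i. l * w i)"
      using w0 by (intro bexI[of _ w0]) auto
    show "\<forall>m v. v \<in> vanish_from N \<longrightarrow> dot N v v \<noteq> 0 \<longrightarrow> mat_app N M v = (\<lambda>i. m * v i) \<longrightarrow> m \<le> l"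
      using eigenvalue_le_rayleigh_bound[OF bound] by blast
  qed blast
qed

section \<open>Basis states and paths of bond moves\<close>

lemma digit_0: "digit n 0 x = x mod (n + 1)"
  by (simp add: digit_def)

lemma digit_Suc: "digit n (Suc q) x = digit n q (x div (n + 1))"
  unfolding digit_def power_Suc by (simp only: div_mult2_eq)

lemma digit_le: "digit n q x \<le> n"
  unfolding digit_def using less_Suc_eq_le by auto

lemma digits_eq_imp_eq:
  "x < (n+1)^m \<Longrightarrow> y < (n+1)^m \<Longrightarrow> (\<forall>q<m. digit n q x = digit n q y) \<Longrightarrow> x = y"
proof (induction m arbitrary: x y)
  case 0 then show ?case by simp
next
  case (Suc m)
  have "x div (n+1) < (n+1)^m" "y div (n+1) < (n+1)^m"
    using Suc.prems by (auto simp: less_mult_imp_div_less mult.commute)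
  moreover have "\<forall>q<m. digit n q (x div (n+1)) = digit n q (y div (n+1))"
    using Suc.prems(3) by (metis digit_Suc Suc_mono)
  ultimately have "x div (n+1) = y div (n+1)" using Suc.IH by blast
  moreover have "x mod (n+1) = y mod (n+1)" using Suc.prems(3)[rule_format, of 0] by (simp add: digit_0)
  ultimately show ?case by (metis div_mult_mod_eq)
qed

lemma exists_digits:
  "(\<forall>q<m. f q \<le> n) \<Longrightarrow> \<exists>x<(n+1)^m. \<forall>q<m. digit n q x = f q"
proof (induction m arbitrary: f)
  case 0 then show ?case by simp
next
  case (Suc m)
  obtain x' where x': "x' < (n+1)^m" "\<forall>q<m. digit n q x' = f (Suc q)"
    using Suc.IH[of "\<lambda>q. f (Suc q)"] Suc.prems by auto
  define x where "x = f 0 + (n+1) * x'"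
  have f0: "f 0 < n + 1" using Suc.prems by auto
  have xd1: "x div (n+1) = x'" using f0 unfolding x_def
    by (subst div_mult_self2) auto
  have xd2: "x mod (n+1) = f 0" using f0 unfolding x_def
    by (simp only: mod_mult_self2, simp)
  note xd = xd1 xd2 xd1[simplified] xd2[simplified]
  have "x < (n+1)^Suc m"
  proof -
    have "x' + 1 \<le> (n+1)^m" using x' by simp
    then have "(n+1) * (x'+1) \<le> (n+1) * (n+1)^m" by (rule mult_le_mono2)
    moreover have "x < (n+1) * (x'+1)" unfolding x_def using f0 by (simp add: algebra_simps)
    ultimately show ?thesis by (metis power_Suc order_less_le_trans)
  qed
  moreover have "\<forall>q<Suc m. digit n q x = f q"
  proof (intro allI impI)
    fix q assume "q < Suc m"
    then show "digit n q x = f q"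
      by (cases q) (auto simp: digit_0 digit_Suc xd x')
  qed
  ultimately show ?case by blast
qed

definition bond_linked :: "nat \<Rightarrow> nat \<Rightarrow> nat \<Rightarrow> nat \<Rightarrow> nat \<Rightarrow> bool" where
  "bond_linked n L p x z \<longleftrightarrow> digit n (p + 1) x = n - digit n p x \<and> digit n (p + 1) z = n - digit n p z
        \<and> (\<forall>q < 2 * L. q \<noteq> p \<and> q \<noteq> p + 1 \<longrightarrow> digit n q x = digit n q z)"

definition dimer_config :: "nat \<Rightarrow> nat \<Rightarrow> nat \<Rightarrow> bool" where
  "dimer_config n L x \<longleftrightarrow> (\<forall>j<L. digit n (2 * j + 1) x = n - digit n (2 * j) x)"

fun path_count :: "nat \<Rightarrow> nat \<Rightarrow> nat list \<Rightarrow> nat \<Rightarrow> nat \<Rightarrow> nat" where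
  "path_count n L [] x y = (if x = y then 1 else 0)"
| "path_count n L (p # ws) x y = (\<Sum>z<(n+1)^(2*L). if bond_linked n L p x z then path_count n L ws z y else 0)"

definition bond_paths :: "nat \<Rightarrow> nat \<Rightarrow> nat list \<Rightarrow> nat list set" where
  "bond_paths n L ws = {zs. length zs = Suc (length ws) \<and> (\<forall>i<length zs. zs ! i < (n+1)^(2*L))
      \<and> (\<forall>i<length ws. bond_linked n L (ws ! i) (zs ! i) (zs ! Suc i))}"

definition paths_between :: "nat \<Rightarrow> nat \<Rightarrow> nat list \<Rightarrow> nat \<Rightarrow> nat \<Rightarrow> nat list set" where
  "paths_between n L ws x y = {zs \<in> bond_paths n L ws. zs ! 0 = x \<and> zs ! length ws = y}"

lemma finite_bond_paths: "finite (bond_paths n L ws)"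
proof -
  have "bond_paths n L ws \<subseteq> {zs. set zs \<subseteq> {..<(n+1)^(2*L)} \<and> length zs = Suc (length ws)}"
    unfolding bond_paths_def by (auto simp: in_set_conv_nth)
  moreover have "finite {zs. set zs \<subseteq> {..<(n+1)^(2*L)} \<and> length zs = Suc (length ws)}"
    by (rule finite_lists_length_eq) simp
  ultimately show ?thesis by (rule finite_subset)
qed

lemma finite_paths_between: "finite (paths_between n L ws x y)"
  using finite_bond_paths unfolding paths_between_def by auto

lemma paths_between_Nil:
  "x < (n+1)^(2*L) \<Longrightarrow> paths_between n L [] x y = (if x = y then {[x]} else {})"
  unfolding paths_between_def bond_paths_def by (auto simp: length_Suc_conv)

lemma paths_between_Cons:
  "x < (n+1)^(2*L) \<Longrightarrow> paths_between n L (p # ws) x y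
    = (\<Union>z\<in>{z. z < (n+1)^(2*L) \<and> bond_linked n L p x z}. Cons x ` paths_between n L ws z y)"
proof (rule Set.set_eqI, rule HOL.iffI)
  fix zs assume "zs \<in> paths_between n L (p # ws) x y"
  then obtain z zs' where zs: "zs = x # zs'" and "zs' ! 0 = z"
    and P: "zs \<in> bond_paths n L (p#ws)" "zs ! Suc (length ws) = y"
    unfolding paths_between_def by (cases zs) (auto simp: bond_paths_def)
  then have l: "length zs' = Suc (length ws)" unfolding bond_paths_def by auto
  have P1: "\<forall>i<Suc (Suc (length ws)). zs ! i < (n+1)^(2*L)"
    and P2: "\<forall>i<Suc (length ws). bond_linked n L ((p#ws) ! i) (zs ! i) (zs ! Suc i)"
    using P unfolding bond_paths_def by auto
  have "zs' \<in> paths_between n L ws z y"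
    unfolding paths_between_def bond_paths_def
  proof (intro CollectI conjI allI impI)
    fix i assume "i < length zs'"
    then show "zs' ! i < (n+1)^(2*L)" using P1[rule_format, of "Suc i"] l zs by simp
  next
    fix i assume "i < length ws"
    then show "bond_linked n L (ws ! i) (zs' ! i) (zs' ! Suc i)" using P2[rule_format, of "Suc i"] zs by simp
  qed (use l \<open>zs' ! 0 = z\<close> P zs in auto)
  moreover have "z < (n+1)^(2*L)" using P1[rule_format, of 1] zs \<open>zs' ! 0 = z\<close> by simp
  moreover have "bond_linked n L p x z" using P2[rule_format, of 0] zs \<open>zs' ! 0 = z\<close> by simp
  ultimately show "zs \<in> (\<Union>z\<in>{z. z < (n+1)^(2*L) \<and> bond_linked n L p x z}.
      Cons x ` paths_between n L ws z y)"
    using zs by auto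
next
  fix zs assume "x < (n+1)^(2*L)"
    "zs \<in> (\<Union>z\<in>{z. z < (n+1)^(2*L) \<and> bond_linked n L p x z}. Cons x ` paths_between n L ws z y)"
  then obtain z zs' where zs: "zs = x # zs'" and z: "z < (n+1)^(2*L)" "bond_linked n L p x z"
    and P: "zs' \<in> paths_between n L ws z y"
    by auto
  have l: "length zs' = Suc (length ws)" using P unfolding paths_between_def bond_paths_def by auto
  show "zs \<in> paths_between n L (p # ws) x y"
    unfolding paths_between_def bond_paths_def zs
  proof (intro CollectI conjI allI impI)
    show "length (x # zs') = Suc (length (p # ws))" using l by simp
    fix i assume "i < length (x # zs')"
    then show "(x # zs') ! i < (n+1)^(2*L)" using P \<open>x < _\<close> unfolding paths_between_def bond_paths_def
      by (cases i) auto
  next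
    fix i assume i: "i < length (p # ws)"
    show "bond_linked n L ((p # ws) ! i) ((x # zs') ! i) ((x # zs') ! Suc i)"
    proof (cases i)
      case 0 then show ?thesis using z P unfolding paths_between_def by auto
    next
      case (Suc j) then show ?thesis using P i unfolding paths_between_def bond_paths_def by auto
    qed
  next
    show "(x # zs') ! 0 = x" by simp
    show "(x # zs') ! length (p # ws) = y" using P unfolding paths_between_def by simp
  qed
qed

lemma path_count_eq_card:
  "x < (n+1)^(2*L) \<Longrightarrow> path_count n L ws x y = card (paths_between n L ws x y)"
proof (induction ws arbitrary: x)
  case Nil then show ?case by (simp add: paths_between_Nil)
next
  case (Cons p ws)
  let ?Z = "{z. z < (n+1)^(2*L) \<and> bond_linked n L p x z}"
  have "card (paths_between n L (p # ws) x y) = card (\<Union>z\<in>?Z. Cons x ` paths_between n L ws z y)"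
    using paths_between_Cons[OF Cons.prems] by simp
  also have "\<dots> = (\<Sum>z\<in>?Z. card (Cons x ` paths_between n L ws z y))"
  proof (rule card_UN_disjoint)
    show "finite ?Z" by simp
    show "\<forall>i\<in>?Z. finite (Cons x ` paths_between n L ws i y)" using finite_paths_between by auto
    show "\<forall>i\<in>?Z. \<forall>j\<in>?Z. i \<noteq> j
        \<longrightarrow> Cons x ` paths_between n L ws i y \<inter> Cons x ` paths_between n L ws j y = {}"
      unfolding paths_between_def by auto
  qed
  also have "\<dots> = (\<Sum>z\<in>?Z. card (paths_between n L ws z y))"
    by (intro sum.cong refl card_image) auto
  also have "\<dots> = (\<Sum>z\<in>?Z. path_count n L ws z y)" using Cons.IH by simp
  also have "\<dots> = path_count n L (p # ws) x y"
    by (simp add: sum.If_cases lessThan_def Collect_conj_eq Int_commute)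
  finally show ?case by simp
qed

text \<open>Reading the digit at odd sites as \<open>n\<close> minus the digit turns the pairing condition of
  \<open>bond_linked\<close> into an equality of colours, so paths become colourings of a grid.\<close>

definition site_color :: "nat \<Rightarrow> nat \<Rightarrow> nat \<Rightarrow> nat" where
  "site_color n q a = (if odd q then n - a else a)"

lemma site_color_le: "a \<le> n \<Longrightarrow> site_color n q a \<le> n"
  unfolding site_color_def by auto

lemma site_color_involutive: "a \<le> n \<Longrightarrow> site_color n q (site_color n q a) = a"
  unfolding site_color_def by auto

lemma site_color_eq_iff: "a \<le> n \<Longrightarrow> b \<le> n \<Longrightarrow> site_color n q a = site_color n q b \<longleftrightarrow> a = b"
  unfolding site_color_def by auto

lemma site_color_pair_eq_iff:
  "a \<le> n \<Longrightarrow> b \<le> n \<Longrightarrow> site_color n p a = site_color n (Suc p) b \<longleftrightarrow> b = n - a"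
  unfolding site_color_def by auto

definition path_coloring :: "nat \<Rightarrow> nat \<Rightarrow> nat \<Rightarrow> nat list \<Rightarrow> (nat \<times> nat \<Rightarrow> nat)" where
  "path_coloring n L k zs = restrict (\<lambda>(i,q). site_color n q (digit n q (zs ! i))) ({..k} \<times> {..<2*L})"

definition state_lists :: "nat \<Rightarrow> nat \<Rightarrow> nat \<Rightarrow> nat list set" where
  "state_lists n L k = {zs. length zs = Suc k \<and> (\<forall>i<Suc k. zs ! i < (n+1)^(2*L))}"

lemma path_coloring_PiE: "path_coloring n L k zs \<in> ({..k} \<times> {..<2*L}) \<rightarrow>\<^sub>E {..n}"
  unfolding path_coloring_def by (auto intro: site_color_le digit_le)

lemma inj_on_path_coloring: "inj_on (path_coloring n L k) (state_lists n L k)"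
proof (rule inj_onI)
  fix zs1 zs2 assume z1: "zs1 \<in> state_lists n L k" and z2: "zs2 \<in> state_lists n L k"
    and eq: "path_coloring n L k zs1 = path_coloring n L k zs2"
  show "zs1 = zs2"
  proof (rule nth_equalityI)
    show "length zs1 = length zs2" using z1 z2 unfolding state_lists_def by auto
    fix i assume "i < length zs1"
    then have i: "i \<le> k" using z1 unfolding state_lists_def by auto
    have "\<forall>q<2*L. digit n q (zs1 ! i) = digit n q (zs2 ! i)"
    proof (intro allI impI)
      fix q assume q: "q < 2*L"
      have "path_coloring n L k zs1 (i,q) = path_coloring n L k zs2 (i,q)" using eq by simp
      then have "site_color n q (digit n q (zs1 ! i)) = site_color n q (digit n q (zs2 ! i))"
        unfolding path_coloring_def using i q by auto
      then show "digit n q (zs1 ! i) = digit n q (zs2 ! i)" using site_color_eq_iff digit_le by blast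
    qed
    moreover have "zs1 ! i < (n+1)^(2*L)" "zs2 ! i < (n+1)^(2*L)"
      using z1 z2 i unfolding state_lists_def by auto
    ultimately show "zs1 ! i = zs2 ! i" using digits_eq_imp_eq by blast
  qed
qed

lemma path_coloring_surj:
  assumes c: "c \<in> ({..k} \<times> {..<2*L}) \<rightarrow>\<^sub>E {..n}"
  shows "\<exists>zs\<in>state_lists n L k. path_coloring n L k zs = c"
proof -
  have ex: "\<exists>x<(n+1)^(2*L). \<forall>q<2*L. digit n q x = site_color n q (c (i,q))" if "i \<le> k" for i
    by (rule exists_digits) (use c that in \<open>auto intro!: site_color_le\<close>)
  define xs where "xs i = (SOME x. x<(n+1)^(2*L) \<and> (\<forall>q<2*L. digit n q x = site_color n q (c (i,q))))" for i
  have xs: "xs i < (n+1)^(2*L) \<and> (\<forall>q<2*L. digit n q (xs i) = site_color n q (c (i,q)))" if "i \<le> k" for i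
    unfolding xs_def by (rule someI_ex) (use ex[OF that] in blast)
  define zs where "zs = map xs [0..<Suc k]"
  have "zs \<in> state_lists n L k" unfolding state_lists_def zs_def using xs
    by (auto simp del: upt_Suc)
  moreover have "path_coloring n L k zs = c"
  proof
    fix iq :: "nat \<times> nat"
    obtain i q where iq: "iq = (i,q)" by force
    show "path_coloring n L k zs iq = c iq"
    proof (cases "i \<le> k \<and> q < 2*L")
      case True
      then have "zs ! i = xs i" unfolding zs_def by (simp del: upt_Suc add: nth_map_upt)
      then have "path_coloring n L k zs iq = site_color n q (site_color n q (c (i,q)))"
        unfolding path_coloring_def iq using True xs by auto
      also have "\<dots> = c (i,q)" using c True by (intro site_color_involutive) auto
      finally show ?thesis using iq by simp
    next
      case False
      then show ?thesis using c unfolding path_coloring_def iq by (auto simp: PiE_def extensional_def)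
    qed
  qed
  ultimately show ?thesis by blast
qed

definition step_constraints :: "nat \<Rightarrow> nat \<Rightarrow> nat \<Rightarrow> ((nat \<times> nat) \<times> (nat \<times> nat)) set" where
  "step_constraints L p i = {((i, p), (i, Suc p)), ((Suc i, p), (Suc i, Suc p))}
     \<union> {((i, q), (Suc i, q)) | q. q < 2 * L \<and> q \<noteq> p \<and> q \<noteq> Suc p}"

definition path_constraints :: "nat \<Rightarrow> nat list \<Rightarrow> ((nat \<times> nat) \<times> (nat \<times> nat)) set" where
  "path_constraints L ws = (\<Union>i<length ws. step_constraints L (ws ! i) i)"

lemma bond_linked_iff_site_colors:
  "bond_linked n L p x z \<longleftrightarrow>
     site_color n p (digit n p x) = site_color n (Suc p) (digit n (Suc p) x) \<and>
     site_color n p (digit n p z) = site_color n (Suc p) (digit n (Suc p) z) \<and>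
     (\<forall>q<2*L. q \<noteq> p \<and> q \<noteq> Suc p \<longrightarrow> site_color n q (digit n q x) = site_color n q (digit n q z))"
  unfolding bond_linked_def using site_color_pair_eq_iff site_color_eq_iff digit_le by auto

lemma path_coloring_in_colorings_iff:
  assumes zs: "zs \<in> state_lists n L (length ws)" and ws: "\<forall>p\<in>set ws. Suc p < 2*L"
  shows "path_coloring n L (length ws) zs \<in> colorings ({..length ws} \<times> {..<2*L}) {..n} (path_constraints L ws)
    \<longleftrightarrow> zs \<in> bond_paths n L ws"
proof -
  let ?k = "length ws"
  let ?c = "path_coloring n L ?k zs"
  have cv: "?c (i,q) = site_color n q (digit n q (zs ! i))" if "i \<le> ?k" "q < 2*L" for i q
    unfolding path_coloring_def using that by auto
  have step: "(\<forall>(a, b)\<in>step_constraints L (ws ! i) i. ?c a = ?c b)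
      \<longleftrightarrow> bond_linked n L (ws ! i) (zs ! i) (zs ! Suc i)" if i: "i < ?k" for i
  proof -
    have p: "Suc (ws!i) < 2*L" using ws i by auto
    show ?thesis using bond_linked_iff_site_colors[of n L "ws ! i" "zs ! i" "zs ! Suc i"] i p cv
      by (auto simp: cv step_constraints_def)
  qed
  have "?c \<in> colorings ({..?k} \<times> {..<2*L}) {..n} (path_constraints L ws) \<longleftrightarrow>
      (\<forall>i<?k. \<forall>(a, b)\<in>step_constraints L (ws ! i) i. ?c a = ?c b)"
    unfolding colorings_def path_constraints_def using path_coloring_PiE[of n L ?k zs] by blast
  also have "\<dots> \<longleftrightarrow> (\<forall>i<?k. bond_linked n L (ws!i) (zs!i) (zs!Suc i))" using step by auto
  also have "\<dots> \<longleftrightarrow> zs \<in> bond_paths n L ws" using zs unfolding bond_paths_def state_lists_def by auto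
  finally show ?thesis .
qed

definition closed_paths :: "nat \<Rightarrow> nat \<Rightarrow> nat list \<Rightarrow> nat list set" where
  "closed_paths n L ws = {zs \<in> bond_paths n L ws. zs ! 0 = zs ! length ws}"

definition dimer_paths :: "nat \<Rightarrow> nat \<Rightarrow> nat list \<Rightarrow> nat list set" where
  "dimer_paths n L ws =
     {zs \<in> bond_paths n L ws. dimer_config n L (zs ! 0) \<and> dimer_config n L (zs ! length ws)}"

definition periodic_constraints :: "nat \<Rightarrow> nat \<Rightarrow> ((nat \<times> nat) \<times> (nat \<times> nat)) set" where
  "periodic_constraints L k = {((0, q), (k, q)) | q. q < 2 * L}"

definition dimer_constraints :: "nat \<Rightarrow> nat \<Rightarrow> ((nat \<times> nat) \<times> (nat \<times> nat)) set" where
  "dimer_constraints L i = (\<lambda>j. ((i, 2 * j), (i, Suc (2 * j)))) ` {..<L}"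

lemma sum_path_count_diag:
  "(\<Sum>x<(n+1)^(2*L). path_count n L ws x x) = card (closed_paths n L ws)"
proof -
  have "(\<Sum>x<(n+1)^(2*L). path_count n L ws x x) = (\<Sum>x<(n+1)^(2*L). card (paths_between n L ws x x))"
    by (simp add: path_count_eq_card)
  also have "\<dots> = card (\<Union>x<(n+1)^(2*L). paths_between n L ws x x)"
    by (rule card_UN_disjoint[symmetric]) (auto simp: paths_between_def finite_bond_paths)
  also have "(\<Union>x<(n+1)^(2*L). paths_between n L ws x x) = closed_paths n L ws"
    unfolding closed_paths_def paths_between_def bond_paths_def by auto
  finally show ?thesis .
qed

lemma sum_path_count_dimer:
  fixes n L :: nat
  defines "DS \<equiv> {x. x < (n+1)^(2*L) \<and> dimer_config n L x}"
  shows "(\<Sum>x\<in>DS. \<Sum>y\<in>DS. path_count n L ws x y) = card (dimer_paths n L ws)"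
proof -
  have "(\<Sum>x\<in>DS. \<Sum>y\<in>DS. path_count n L ws x y)
      = (\<Sum>xy\<in>DS \<times> DS. card (paths_between n L ws (fst xy) (snd xy)))"
    by (simp add: sum.cartesian_product path_count_eq_card case_prod_beta DS_def)
  also have "\<dots> = card (\<Union>xy\<in>DS \<times> DS. paths_between n L ws (fst xy) (snd xy))"
    by (rule card_UN_disjoint[symmetric]) (auto simp: paths_between_def finite_bond_paths DS_def)
  also have "(\<Union>xy\<in>DS \<times> DS. paths_between n L ws (fst xy) (snd xy)) = dimer_paths n L ws"
  proof (rule Set.set_eqI, rule iffI)
    fix zs assume "zs \<in> (\<Union>xy\<in>DS \<times> DS. paths_between n L ws (fst xy) (snd xy))"
    then show "zs \<in> dimer_paths n L ws" unfolding dimer_paths_def paths_between_def DS_def by auto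
  next
    fix zs assume zs: "zs \<in> dimer_paths n L ws"
    then have "zs ! 0 \<in> DS" "zs ! length ws \<in> DS"
      unfolding dimer_paths_def bond_paths_def DS_def by auto
    with zs show "zs \<in> (\<Union>xy\<in>DS \<times> DS. paths_between n L ws (fst xy) (snd xy))"
      unfolding dimer_paths_def paths_between_def by (auto intro!: bexI[of _ "(zs ! 0, zs ! length ws)"])
  qed
  finally show ?thesis .
qed

lemma path_coloring_closed_paths:
  assumes ws: "\<forall>p\<in>set ws. Suc p < 2 * L"
  shows "path_coloring n L (length ws) ` closed_paths n L ws
    \<subseteq> colorings ({..length ws} \<times> {..<2*L}) {..n}
        (path_constraints L ws \<union> periodic_constraints L (length ws))"
proof
  fix c assume "c \<in> path_coloring n L (length ws) ` closed_paths n L ws"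
  then obtain zs where zs: "zs \<in> closed_paths n L ws" and c: "c = path_coloring n L (length ws) zs"
    by auto
  have "zs \<in> state_lists n L (length ws)"
    using zs unfolding closed_paths_def bond_paths_def state_lists_def by auto
  then have "c \<in> colorings ({..length ws} \<times> {..<2*L}) {..n} (path_constraints L ws)"
    using path_coloring_in_colorings_iff[OF _ ws] zs c unfolding closed_paths_def by auto
  moreover have "\<forall>(a, b)\<in>periodic_constraints L (length ws). c a = c b"
    using zs c unfolding periodic_constraints_def closed_paths_def path_coloring_def by auto
  ultimately show "c \<in> colorings ({..length ws} \<times> {..<2*L}) {..n}
      (path_constraints L ws \<union> periodic_constraints L (length ws))"
    unfolding colorings_def by auto
qed

text \<open>Through the periodic constraints the dimer constraints on the first slice force those on
  the last one.\<close>

lemma colorings_dimer_last: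
  "colorings V C (dimer_constraints L 0 \<union> (R \<union> periodic_constraints L k))
    \<subseteq> colorings V C (R \<union> dimer_constraints L 0 \<union> dimer_constraints L k)"
proof
  fix c assume c: "c \<in> colorings V C (dimer_constraints L 0 \<union> (R \<union> periodic_constraints L k))"
  then have cR: "\<forall>(a, b)\<in>dimer_constraints L 0 \<union> (R \<union> periodic_constraints L k). c a = c b"
    by (simp add: colorings_def)
  have "c (k, 2 * j) = c (k, Suc (2 * j))" if j: "j < L" for j
  proof -
    have "((0, 2 * j), (k, 2 * j)) \<in> periodic_constraints L k"
      "((0, Suc (2 * j)), (k, Suc (2 * j))) \<in> periodic_constraints L k"
      "((0, 2 * j), (0, Suc (2 * j))) \<in> dimer_constraints L 0"
      unfolding periodic_constraints_def dimer_constraints_def using j by auto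
    then have "c (0, 2 * j) = c (k, 2 * j)" "c (0, Suc (2 * j)) = c (k, Suc (2 * j))"
      "c (0, 2 * j) = c (0, Suc (2 * j))"
      using bspec[OF cR] by (auto split: prod.splits)
    then show ?thesis by simp
  qed
  then have "\<forall>(a, b)\<in>dimer_constraints L k. c a = c b" unfolding dimer_constraints_def by auto
  moreover have "\<forall>(a, b)\<in>R \<union> dimer_constraints L 0. c a = c b" using cR by blast
  ultimately show "c \<in> colorings V C (R \<union> dimer_constraints L 0 \<union> dimer_constraints L k)"
    using c unfolding colorings_def by (simp add: ball_Un)
qed

lemma colorings_dimer_paths:
  assumes ws: "\<forall>p\<in>set ws. Suc p < 2 * L"
  shows "colorings ({..length ws} \<times> {..<2*L}) {..n}
      (path_constraints L ws \<union> dimer_constraints L 0 \<union> dimer_constraints L (length ws))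
    \<subseteq> path_coloring n L (length ws) ` dimer_paths n L ws"
proof
  let ?k = "length ws"
  fix c assume c: "c \<in> colorings ({..?k} \<times> {..<2*L}) {..n}
      (path_constraints L ws \<union> dimer_constraints L 0 \<union> dimer_constraints L ?k)"
  then obtain zs where zA: "zs \<in> state_lists n L ?k" and cz: "path_coloring n L ?k zs = c"
    using path_coloring_surj unfolding colorings_def by blast
  have "c \<in> colorings ({..?k} \<times> {..<2*L}) {..n} (path_constraints L ws)"
    using c unfolding colorings_def by auto
  then have zP: "zs \<in> bond_paths n L ws" using path_coloring_in_colorings_iff[OF zA ws] cz by simp
  have "dimer_config n L (zs ! i)" if i: "i = 0 \<or> i = ?k" for i
    unfolding dimer_config_def
  proof (intro allI impI)
    fix j assume j: "j < L"
    have "((i, 2 * j), (i, Suc (2 * j))) \<in> dimer_constraints L 0 \<union> dimer_constraints L ?k"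
      using i j unfolding dimer_constraints_def by auto
    then have "c (i, 2 * j) = c (i, Suc (2 * j))" using c unfolding colorings_def by blast
    then have "site_color n (2 * j) (digit n (2 * j) (zs ! i))
        = site_color n (Suc (2 * j)) (digit n (Suc (2 * j)) (zs ! i))"
      using cz i j unfolding path_coloring_def by auto
    then show "digit n (2 * j + 1) (zs ! i) = n - digit n (2 * j) (zs ! i)"
      using site_color_pair_eq_iff digit_le by simp
  qed
  then have "zs \<in> dimer_paths n L ws" unfolding dimer_paths_def using zP by auto
  then show "c \<in> path_coloring n L ?k ` dimer_paths n L ws" using cz by auto
qed

text \<open>The core estimate: identifying the two ends of a closed path in a dimer configuration
  costs at most one colour per dimer.\<close>

lemma card_colorings_periodic_le:
  assumes RV: "R \<subseteq> ({..k} \<times> {..<2*L}) \<times> ({..k} \<times> {..<2*L})"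
  shows "card (colorings ({..k} \<times> {..<2*L}) {..n} (R \<union> periodic_constraints L k))
    \<le> (n + 1) ^ L * card (colorings ({..k} \<times> {..<2*L}) {..n}
        (R \<union> dimer_constraints L 0 \<union> dimer_constraints L k))"
proof -
  let ?V = "{..k} \<times> {..<2*L}"
  let ?C = "{..n}"
  have fV: "finite ?V" and fC: "finite ?C" by auto
  have TV: "periodic_constraints L k \<subseteq> ?V \<times> ?V" unfolding periodic_constraints_def by auto
  have DV: "dimer_constraints L 0 \<subseteq> ?V \<times> ?V" unfolding dimer_constraints_def by auto
  have "card (dimer_constraints L 0) \<le> L"
    unfolding dimer_constraints_def using card_image_le[of "{..<L}"] by auto
  then have C: "card ?C ^ card (dimer_constraints L 0) \<le> (n + 1) ^ L" by (simp add: power_increasing)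
  have "card (colorings ?V ?C (R \<union> periodic_constraints L k))
      \<le> card ?C ^ card (dimer_constraints L 0)
        * card (colorings ?V ?C (dimer_constraints L 0 \<union> (R \<union> periodic_constraints L k)))"
    by (rule card_colorings_le_union[OF fV fC _ DV]) (use RV TV in \<open>auto simp: dimer_constraints_def\<close>)
  also have "\<dots> \<le> (n + 1) ^ L * card (colorings ?V ?C (R \<union> dimer_constraints L 0 \<union> dimer_constraints L k))"
    by (intro mult_le_mono C card_mono[OF finite_colorings[OF fV fC] colorings_dimer_last])
  finally show ?thesis .
qed

lemma card_closed_paths_le:
  assumes ws: "\<forall>p\<in>set ws. Suc p < 2 * L"
  shows "card (closed_paths n L ws) \<le> (n + 1) ^ L * card (dimer_paths n L ws)"
proof -
  let ?k = "length ws"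
  let ?V = "{..?k} \<times> {..<2*L}"
  let ?R = "path_constraints L ws"
  have "\<forall>i<?k. Suc (ws ! i) < 2 * L" using ws by auto
  then have RV: "?R \<subseteq> ?V \<times> ?V" unfolding path_constraints_def step_constraints_def by auto
  have "card (closed_paths n L ws) = card (path_coloring n L ?k ` closed_paths n L ws)"
    by (rule card_image[symmetric], rule inj_on_subset[OF inj_on_path_coloring])
      (auto simp: closed_paths_def bond_paths_def state_lists_def)
  also have "\<dots> \<le> card (colorings ?V {..n} (?R \<union> periodic_constraints L ?k))"
    by (rule card_mono[OF finite_colorings path_coloring_closed_paths[OF ws]]) auto
  also have "\<dots> \<le> (n + 1) ^ L
      * card (colorings ?V {..n} (?R \<union> dimer_constraints L 0 \<union> dimer_constraints L ?k))"
    by (rule card_colorings_periodic_le[OF RV])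
  also have "\<dots> \<le> (n + 1) ^ L * card (path_coloring n L ?k ` dimer_paths n L ws)"
    by (intro mult_le_mono2 card_mono[OF _ colorings_dimer_paths[OF ws]])
      (use finite_bond_paths in \<open>simp add: dimer_paths_def\<close>)
  also have "\<dots> \<le> (n + 1) ^ L * card (dimer_paths n L ws)"
    by (intro mult_le_mono2 card_image_le) (use finite_bond_paths in \<open>simp add: dimer_paths_def\<close>)
  finally show ?thesis .
qed

section \<open>The Hamiltonian as a path-counting kernel\<close>

text \<open>\<open>bond_kernel n L p\<close> is \<open>(2S+1) P\<^sup>(\<^sup>0\<^sup>)\<close> on the bond \<open>p, p + 1\<close> and \<open>ham_kernel n L\<close> is
  \<open>-H\<^sub>A\<^sub>F\<close> (lemma \<open>H_AF_entry\<close>): the sign \<open>(-1)\<^sup>m\<^sup>-\<^sup>m\<^sup>'\<close> of a matrix element factors as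
  \<open>gauge x * gauge z\<close>. Conjugated by the diagonal \<open>gauge\<close>, \<open>-H\<^sub>A\<^sub>F\<close> thus counts bond moves and
  \<open>D\<^sub>L\<close> becomes the indicator of dimer configurations.\<close>

definition gauge :: "nat \<Rightarrow> nat \<Rightarrow> nat \<Rightarrow> real" where
  "gauge n L x = (\<Prod>j<L. (-1::real) ^ digit n (2 * j) x)"

definition bond_kernel :: "nat \<Rightarrow> nat \<Rightarrow> nat \<Rightarrow> nat \<Rightarrow> nat \<Rightarrow> real" where
  "bond_kernel n L p x z = (if bond_linked n L p x z then gauge n L x * gauge n L z else 0)"

definition ham_kernel :: "nat \<Rightarrow> nat \<Rightarrow> nat \<Rightarrow> nat \<Rightarrow> real" where
  "ham_kernel n L x z = (\<Sum>p | p + 1 < 2 * L. bond_kernel n L p x z)"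

definition dimer_fun :: "nat \<Rightarrow> nat \<Rightarrow> nat \<Rightarrow> real" where
  "dimer_fun n L x = (if dimer_config n L x then gauge n L x else 0)"

fun word_kernel :: "nat \<Rightarrow> nat \<Rightarrow> nat list \<Rightarrow> nat \<Rightarrow> nat \<Rightarrow> real" where
  "word_kernel n L [] x y = (if x = y then 1 else 0)"
| "word_kernel n L (p # ws) x y = (\<Sum>z<(n+1)^(2*L). bond_kernel n L p x z * word_kernel n L ws z y)"

definition bond_words :: "nat \<Rightarrow> nat \<Rightarrow> nat list set" where
  "bond_words L k = {ws. length ws = k \<and> (\<forall>p\<in>set ws. Suc p < 2 * L)}"

lemma gauge_sq: "gauge n L x * gauge n L x = 1"
  unfolding gauge_def by (simp add: prod.distrib[symmetric] power_add[symmetric])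

lemma word_kernel_eq:
  "word_kernel n L ws x y = gauge n L x * gauge n L y * real (path_count n L ws x y)"
proof (induction ws arbitrary: x)
  case Nil then show ?case using gauge_sq by auto
next
  case (Cons p ws)
  have "word_kernel n L (p # ws) x y = (\<Sum>z<(n+1)^(2*L). gauge n L x * gauge n L y *
      (if bond_linked n L p x z then real (path_count n L ws z y) else 0))"
    by (auto simp: Cons.IH bond_kernel_def intro!: sum.cong)
      (metis mult.assoc mult.left_commute mult_1_right gauge_sq)
  also have "\<dots> = gauge n L x * gauge n L y *
      (\<Sum>z<(n+1)^(2*L). if bond_linked n L p x z then real (path_count n L ws z y) else 0)"
    by (simp add: sum_distrib_left)
  also have "\<dots> = gauge n L x * gauge n L y * real (path_count n L (p # ws) x y)"
    by (auto simp: of_nat_sum intro!: sum.cong)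
  finally show ?case .
qed

lemma bond_words_Suc:
  "bij_betw (\<lambda>(p, ws). p # ws) ({p. p + 1 < 2 * L} \<times> bond_words L k) (bond_words L (Suc k))"
proof (rule bij_betwI')
  show "\<And>x y. x \<in> {p. p + 1 < 2 * L} \<times> bond_words L k \<Longrightarrow> y \<in> {p. p + 1 < 2 * L} \<times> bond_words L k \<Longrightarrow>
    ((case x of (p, ws) \<Rightarrow> p # ws) = (case y of (p, ws) \<Rightarrow> p # ws)) = (x = y)" by auto
  show "\<And>x. x \<in> {p. p + 1 < 2 * L} \<times> bond_words L k \<Longrightarrow> (case x of (p, ws) \<Rightarrow> p # ws) \<in> bond_words L (Suc k)"
    unfolding bond_words_def by auto
  fix y assume "y \<in> bond_words L (Suc k)"
  then obtain p ws where "y = p # ws" "p + 1 < 2*L" "ws \<in> bond_words L k" unfolding bond_words_def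
    by (cases y) auto
  then show "\<exists>x\<in>{p. p + 1 < 2 * L} \<times> bond_words L k. y = (case x of (p, ws) \<Rightarrow> p # ws)" by auto
qed

lemma kernel_pow_ham_kernel:
  "kernel_pow ((n+1)^(2*L)) (ham_kernel n L) k x y = (\<Sum>ws\<in>bond_words L k. word_kernel n L ws x y)"
proof (induction k arbitrary: x)
  case 0
  have "bond_words L 0 = {[]}" unfolding bond_words_def by auto
  then show ?case by simp
next
  case (Suc k)
  let ?N = "(n+1)^(2*L)"
  let ?P = "{p. p + 1 < 2 * L}"
  have "kernel_pow ?N (ham_kernel n L) (Suc k) x y
      = (\<Sum>l<?N. \<Sum>p\<in>?P. \<Sum>ws\<in>bond_words L k. bond_kernel n L p x l * word_kernel n L ws l y)"
    by (simp only: kernel_pow.simps Suc.IH ham_kernel_def sum_distrib_left sum_distrib_right)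
      (intro sum.cong refl, rule sum.swap)
  also have "\<dots> = (\<Sum>p\<in>?P. \<Sum>l<?N. \<Sum>ws\<in>bond_words L k. bond_kernel n L p x l * word_kernel n L ws l y)"
    by (rule sum.swap)
  also have "\<dots> = (\<Sum>p\<in>?P. \<Sum>ws\<in>bond_words L k. \<Sum>l<?N. bond_kernel n L p x l * word_kernel n L ws l y)"
    by (intro sum.cong refl, rule sum.swap)
  also have "\<dots> = (\<Sum>p\<in>?P. \<Sum>ws\<in>bond_words L k. word_kernel n L (p # ws) x y)"
    by (simp only: word_kernel.simps)
  also have "\<dots> = (\<Sum>pws\<in>?P \<times> bond_words L k. word_kernel n L ((\<lambda>(p,ws). p # ws) pws) x y)"
    by (subst sum.cartesian_product) (simp add: split_def)
  also have "\<dots> = (\<Sum>ws\<in>bond_words L (Suc k). word_kernel n L ws x y)"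
    by (rule sum.reindex_bij_betw[OF bond_words_Suc])
  finally show ?case .
qed

lemma sum_sum_if_both:
  assumes "finite A"
  shows "(\<Sum>x\<in>A. \<Sum>y\<in>A. if P x \<and> P y then f x y else 0)
    = (\<Sum>x\<in>{x\<in>A. P x}. \<Sum>y\<in>{y\<in>A. P y}. f x y)"
proof -
  have "(\<Sum>x\<in>A. \<Sum>y\<in>A. if P x \<and> P y then f x y else 0)
      = (\<Sum>x\<in>A. if P x then \<Sum>y\<in>{y\<in>A. P y}. f x y else 0)"
    using assms by (intro sum.cong refl) (simp add: sum.inter_filter)
  also have "\<dots> = (\<Sum>x\<in>{x\<in>A. P x}. \<Sum>y\<in>{y\<in>A. P y}. f x y)"
    by (simp only: sum.inter_filter[OF assms])
  finally show ?thesis .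
qed

lemma trace_ham_kernel_pow:
  "(\<Sum>x<(n+1)^(2*L). kernel_pow ((n+1)^(2*L)) (ham_kernel n L) k x x)
    = (\<Sum>ws\<in>bond_words L k. real (card (closed_paths n L ws)))"
proof -
  have "(\<Sum>x<(n+1)^(2*L). kernel_pow ((n+1)^(2*L)) (ham_kernel n L) k x x)
      = (\<Sum>x<(n+1)^(2*L). \<Sum>ws\<in>bond_words L k. real (path_count n L ws x x))"
    unfolding kernel_pow_ham_kernel word_kernel_eq by (simp add: gauge_sq)
  also have "\<dots> = (\<Sum>ws\<in>bond_words L k. real (\<Sum>x<(n+1)^(2*L). path_count n L ws x x))"
    by (simp add: sum.swap[of _ "bond_words L k"] of_nat_sum)
  also have "\<dots> = (\<Sum>ws\<in>bond_words L k. real (card (closed_paths n L ws)))"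
    unfolding sum_path_count_diag ..
  finally show ?thesis .
qed

lemma dimer_moment_ham_kernel_pow:
  "(\<Sum>x<(n+1)^(2*L). \<Sum>y<(n+1)^(2*L).
      dimer_fun n L x * kernel_pow ((n+1)^(2*L)) (ham_kernel n L) k x y * dimer_fun n L y)
    = (\<Sum>ws\<in>bond_words L k. real (card (dimer_paths n L ws)))"
proof -
  let ?N = "(n+1)^(2*L)"
  let ?DS = "{x. x < ?N \<and> dimer_config n L x}"
  have "dimer_fun n L x * kernel_pow ?N (ham_kernel n L) k x y * dimer_fun n L y =
      (\<Sum>ws\<in>bond_words L k. if dimer_config n L x \<and> dimer_config n L y then real (path_count n L ws x y) else 0)"
    for x y
  proof -
    have g: "gauge n L x * (gauge n L x * gauge n L y * r) * gauge n L y = r" for r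
    proof -
      have "gauge n L x * (gauge n L x * gauge n L y * r) * gauge n L y
          = (gauge n L x * gauge n L x) * (gauge n L y * gauge n L y) * r"
        by (simp only: mult_ac)
      then show ?thesis by (simp add: gauge_sq)
    qed
    show ?thesis
      unfolding kernel_pow_ham_kernel word_kernel_eq dimer_fun_def sum_distrib_left sum_distrib_right
      by (intro sum.cong refl) (auto simp: g)
  qed
  then have "(\<Sum>x<?N. \<Sum>y<?N. dimer_fun n L x * kernel_pow ?N (ham_kernel n L) k x y * dimer_fun n L y)
      = (\<Sum>x<?N. \<Sum>y<?N. \<Sum>ws\<in>bond_words L k.
          if dimer_config n L x \<and> dimer_config n L y then real (path_count n L ws x y) else 0)"
    by simp
  also have "\<dots> = (\<Sum>x<?N. \<Sum>ws\<in>bond_words L k. \<Sum>y<?N.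
          if dimer_config n L x \<and> dimer_config n L y then real (path_count n L ws x y) else 0)"
    by (intro sum.cong refl) (rule sum.swap)
  also have "\<dots> = (\<Sum>ws\<in>bond_words L k. \<Sum>x<?N. \<Sum>y<?N.
          if dimer_config n L x \<and> dimer_config n L y then real (path_count n L ws x y) else 0)"
    by (rule sum.swap)
  also have "\<dots> = (\<Sum>ws\<in>bond_words L k. real (\<Sum>x\<in>?DS. \<Sum>y\<in>?DS. path_count n L ws x y))"
    by (simp add: sum_sum_if_both of_nat_sum)
  also have "\<dots> = (\<Sum>ws\<in>bond_words L k. real (card (dimer_paths n L ws)))"
    unfolding sum_path_count_dimer ..
  finally show ?thesis .
qed

lemma trace_le_dimer_moment:
  "(\<Sum>x<(n+1)^(2*L). kernel_pow ((n+1)^(2*L)) (ham_kernel n L) k x x)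
    \<le> real ((n+1)^L) * (\<Sum>x<(n+1)^(2*L). \<Sum>y<(n+1)^(2*L).
        dimer_fun n L x * kernel_pow ((n+1)^(2*L)) (ham_kernel n L) k x y * dimer_fun n L y)"
  unfolding trace_ham_kernel_pow dimer_moment_ham_kernel_pow sum_distrib_left
proof (rule sum_mono)
  fix ws assume "ws \<in> bond_words L k"
  then have "card (closed_paths n L ws) \<le> (n + 1) ^ L * card (dimer_paths n L ws)"
    by (intro card_closed_paths_le) (auto simp: bond_words_def)
  then show "real (card (closed_paths n L ws)) \<le> real ((n+1)^L) * real (card (dimer_paths n L ws))"
    unfolding of_nat_mult[symmetric] of_nat_le_iff .
qed

lemma bond_linked_sym: "bond_linked n L p x z \<longleftrightarrow> bond_linked n L p z x"
  unfolding bond_linked_def by auto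

lemma bond_linked_trans: "bond_linked n L p x z \<Longrightarrow> bond_linked n L p z y \<Longrightarrow> bond_linked n L p x y"
  unfolding bond_linked_def by auto

lemma bond_kernel_sym: "bond_kernel n L p x z = bond_kernel n L p z x"
  unfolding bond_kernel_def using bond_linked_sym by (auto simp: mult.commute)

lemma symmetric_ham_kernel: "symmetric_kernel N (ham_kernel n L)"
  unfolding symmetric_kernel_def ham_kernel_def using bond_kernel_sym by simp

lemma card_bond_linked:
  assumes p: "p + 1 < 2 * L" and x: "bond_linked n L p x x"
  shows "card {z. z < (n+1)^(2*L) \<and> bond_linked n L p x z} = n + 1"
proof -
  let ?Z = "{z. z < (n+1)^(2*L) \<and> bond_linked n L p x z}"
  have "bij_betw (digit n p) ?Z {..n}"
  proof (rule bij_betwI')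
    fix z1 z2 assume z1: "z1 \<in> ?Z" and z2: "z2 \<in> ?Z"
    show "digit n p z1 = digit n p z2 \<longleftrightarrow> z1 = z2"
    proof
      assume e: "digit n p z1 = digit n p z2"
      have "\<forall>q<2*L. digit n q z1 = digit n q z2"
      proof (intro allI impI)
        fix q assume q: "q < 2 * L"
        show "digit n q z1 = digit n q z2"
        proof (cases "q = p \<or> q = p + 1")
          case True then show ?thesis using e z1 z2 unfolding bond_linked_def by auto
        next
          case False then show ?thesis using z1 z2 q unfolding bond_linked_def by auto
        qed
      qed
      then show "z1 = z2" using digits_eq_imp_eq z1 z2 by blast
    qed simp
  next
    fix z assume "z \<in> ?Z" then show "digit n p z \<in> {..n}" using digit_le by auto
  next
    fix a assume a: "a \<in> {..n}"
    have "\<forall>q<2*L. (if q = p then a else if q = p + 1 then n - a else digit n q x) \<le> n"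
      using a digit_le by auto
    from exists_digits[OF this] obtain z where z: "z < (n+1)^(2*L)"
      "\<forall>q<2*L. digit n q z = (if q = p then a else if q = p + 1 then n - a else digit n q x)"
      by blast
    have "bond_linked n L p x z" using x z p unfolding bond_linked_def by auto
    moreover have "digit n p z = a" using z p by auto
    ultimately show "\<exists>z\<in>?Z. a = digit n p z" using z by auto
  qed
  then show ?thesis by (simp add: bij_betw_same_card)
qed

text \<open>The projection property \<open>P\<^sup>2 = P\<close> of \<open>P\<^sup>(\<^sup>0\<^sup>)\<close>, for \<open>bond_kernel = (2S+1) P\<^sup>(\<^sup>0\<^sup>)\<close>.\<close>

lemma bond_kernel_square:
  assumes p: "p + 1 < 2 * L"
  shows "(\<Sum>z<(n+1)^(2*L). bond_kernel n L p x z * bond_kernel n L p z y) = real (n + 1) * bond_kernel n L p x y"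
proof -
  have "(\<Sum>z<(n+1)^(2*L). bond_kernel n L p x z * bond_kernel n L p z y)
      = (\<Sum>z<(n+1)^(2*L). if bond_linked n L p x z \<and> bond_linked n L p z y then gauge n L x * gauge n L y else 0)"
    unfolding bond_kernel_def by (intro sum.cong refl) (auto simp: ac_simps gauge_sq)
  also have "\<dots> = (\<Sum>z\<in>{z. z < (n+1)^(2*L) \<and> bond_linked n L p x z \<and> bond_linked n L p z y}. gauge n L x * gauge n L y)"
    by (simp add: sum.If_cases lessThan_def Collect_conj_eq Int_commute Int_left_commute Int_assoc)
  also have "\<dots> = real (n + 1) * bond_kernel n L p x y"
  proof (cases "bond_linked n L p x y")
    case True
    have "{z. z < (n+1)^(2*L) \<and> bond_linked n L p x z \<and> bond_linked n L p z y}
        = {z. z < (n+1)^(2*L) \<and> bond_linked n L p x z}"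
      using True bond_linked_sym bond_linked_trans by blast
    moreover have "bond_linked n L p x x" using True bond_linked_sym bond_linked_trans by blast
    ultimately show ?thesis using card_bond_linked[OF p] True unfolding bond_kernel_def by simp
  next
    case False
    have "{z. z < (n+1)^(2*L) \<and> bond_linked n L p x z \<and> bond_linked n L p z y} = {}"
      using False bond_linked_trans by blast
    then show ?thesis using False unfolding bond_kernel_def by simp
  qed
  finally show ?thesis .
qed

lemma bond_kernel_psd:
  assumes p: "p + 1 < 2 * L"
  shows "quad_form ((n+1)^(2*L)) (bond_kernel n L p) x \<ge> 0"
proof -
  let ?N = "(n+1)^(2*L)"
  let ?E = "bond_kernel n L p"
  have sym: "symmetric_kernel ?N ?E" unfolding symmetric_kernel_def using bond_kernel_sym by simp
  have EE: "mat_app ?N ?E (mat_app ?N ?E x) = (\<lambda>i. real (n + 1) * mat_app ?N ?E x i)"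
  proof
    fix i
    show "mat_app ?N ?E (mat_app ?N ?E x) i = real (n + 1) * mat_app ?N ?E x i"
    proof (cases "i < ?N")
      case True
      have "mat_app ?N ?E (mat_app ?N ?E x) i = (\<Sum>l<?N. (\<Sum>j<?N. ?E i j * ?E j l) * x l)"
        using True unfolding mat_app_def
        by (simp add: sum_distrib_left sum_distrib_right mult.assoc) (rule sum.swap)
      also have "\<dots> = real (n + 1) * mat_app ?N ?E x i"
        using True unfolding mat_app_def bond_kernel_square[OF p]
        by (simp add: sum_distrib_left mult.assoc)
      finally show ?thesis .
    qed (simp add: mat_app_def)
  qed
  have "real (n + 1) * quad_form ?N ?E x = dot ?N (mat_app ?N ?E x) (mat_app ?N ?E x)"
    unfolding quad_form_def mat_app_adjoint[OF sym, of x, symmetric] EE by (simp add: dot_scale_right)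
  then have "real (n + 1) * quad_form ?N ?E x \<ge> 0" by (simp add: dot_self_nonneg)
  then show ?thesis by (simp add: zero_le_mult_iff)
qed

lemma ham_kernel_psd: "quad_form ((n+1)^(2*L)) (ham_kernel n L) x \<ge> 0"
proof -
  let ?N = "(n+1)^(2*L)"
  have "quad_form ?N (ham_kernel n L) x = (\<Sum>i<?N. \<Sum>j<?N. \<Sum>p | p + 1 < 2 * L. x i * bond_kernel n L p i j * x j)"
    unfolding quad_form_expand ham_kernel_def by (simp only: sum_distrib_left sum_distrib_right)
  also have "\<dots> = (\<Sum>p | p + 1 < 2 * L. quad_form ?N (bond_kernel n L p) x)"
    unfolding quad_form_expand by (simp only: sum.swap[of _ "{p. p + 1 < 2 * L}"])
  also have "\<dots> \<ge> 0" by (rule sum_nonneg) (use bond_kernel_psd in blast)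
  finally show ?thesis .
qed

section \<open>The Hamiltonian and the dimer vector as matrices\<close>

text \<open>The states differ only on the bond, which meets one dimer \<open>2 j\<^sub>0, 2 j\<^sub>0 + 1\<close>; if \<open>p = 2 j\<^sub>0 + 1\<close>,
  the digits at \<open>2 j\<^sub>0\<close> are \<open>n\<close> minus those at \<open>p\<close>, which leaves the parity of their sum unchanged.\<close>

lemma bond_sign_eq_gauge:
  assumes p: "p + 1 < 2 * L" and r: "bond_linked n L p x z"
  shows "(-1::real) ^ (digit n p x + digit n p z) = gauge n L x * gauge n L z"
proof -
  define j0 where "j0 = (p + 1) div 2"
  have j0L: "j0 < L" using p unfolding j0_def by auto
  have j0p: "2 * j0 = p \<or> 2 * j0 = p + 1" unfolding j0_def by presburger
  have rr: "digit n (p + 1) x = n - digit n p x" "digit n (p + 1) z = n - digit n p z"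
    "\<And>q. q < 2 * L \<Longrightarrow> q \<noteq> p \<Longrightarrow> q \<noteq> p + 1 \<Longrightarrow> digit n q x = digit n q z"
    using r unfolding bond_linked_def by auto
  have "gauge n L x * gauge n L z = (\<Prod>j<L. (-1::real) ^ (digit n (2 * j) x + digit n (2 * j) z))"
    unfolding gauge_def by (simp add: prod.distrib[symmetric] power_add)
  also have "\<dots> = (-1::real) ^ (digit n (2 * j0) x + digit n (2 * j0) z) *
      (\<Prod>j\<in>{..<L} - {j0}. (-1::real) ^ (digit n (2 * j) x + digit n (2 * j) z))"
    using j0L by (simp add: prod.remove)
  also have "(\<Prod>j\<in>{..<L} - {j0}. (-1::real) ^ (digit n (2 * j) x + digit n (2 * j) z)) = 1"
  proof (rule prod.neutral, rule ballI)
    fix j assume j: "j \<in> {..<L} - {j0}"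
    then have "2 * j \<noteq> p" "2 * j \<noteq> p + 1" using j0p unfolding j0_def by auto
    then have "digit n (2 * j) x = digit n (2 * j) z" using rr(3)[of "2 * j"] j by auto
    then show "(-1::real) ^ (digit n (2 * j) x + digit n (2 * j) z) = 1" by simp
  qed
  also have "(-1::real) ^ (digit n (2 * j0) x + digit n (2 * j0) z) = (-1) ^ (digit n p x + digit n p z)"
  proof (cases "2 * j0 = p")
    case False
    then have e: "2 * j0 = p + 1" using j0p by auto
    have "digit n p x \<le> n" "digit n p z \<le> n" by (auto intro: digit_le)
    then have "even ((digit n (2 * j0) x + digit n (2 * j0) z) + (digit n p x + digit n p z))"
      unfolding e rr by (simp add: algebra_simps)
    then show ?thesis by (simp add: minus_one_power_iff)
  qed simp
  finally show ?thesis by simp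
qed

lemma hdim_eq: "hdim n L = (n + 1) ^ (2 * L)"
  unfolding hdim_def by simp

lemma H_AF_carrier: "H_AF n L \<in> carrier_mat (hdim n L) (hdim n L)"
  unfolding H_AF_def by simp

lemma dim_row_H_AF: "dim_row (H_AF n L) = hdim n L"
  unfolding H_AF_def by simp

lemma dim_col_H_AF: "dim_col (H_AF n L) = hdim n L"
  unfolding H_AF_def by simp

lemma dim_D_vec: "dim_vec (D_vec n L) = hdim n L"
  unfolding D_vec_def by simp

lemma H_AF_entry:
  assumes "i < hdim n L" "j < hdim n L"
  shows "H_AF n L $$ (i, j) = - ham_kernel n L i j"
proof -
  have "singlet_proj n L p $$ (i, j) * real (n + 1) = bond_kernel n L p i j" if p: "p + 1 < 2 * L" for p
  proof -
    have "singlet_proj n L p $$ (i, j)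
        = (if bond_linked n L p i j then (-1) ^ (digit n p i + digit n p j) / real (n + 1) else 0)"
      unfolding singlet_proj_def bond_linked_def using assms by simp
    then show ?thesis unfolding bond_kernel_def using bond_sign_eq_gauge[OF p] by auto
  qed
  then have "(\<Sum>p | p + 1 < 2 * L. singlet_proj n L p $$ (i, j) * real (n + 1)) = ham_kernel n L i j"
    unfolding ham_kernel_def by (intro sum.cong) auto
  moreover have "H_AF n L $$ (i, j) = - real (n + 1) * (\<Sum>p | p + 1 < 2 * L. singlet_proj n L p $$ (i, j))"
    unfolding H_AF_def using assms by (subst index_mat) auto
  then have "H_AF n L $$ (i, j) = - (\<Sum>p | p + 1 < 2 * L. singlet_proj n L p $$ (i, j) * real (n + 1))"
    by (simp only: mult_minus_left sum_distrib_left mult.commute sum_negf)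
  ultimately show ?thesis by simp
qed

lemma D_vec_entry: "x < hdim n L \<Longrightarrow> D_vec n L $ x = dimer_fun n L x"
  unfolding D_vec_def dimer_fun_def dimer_config_def gauge_def
  by (auto intro!: prod.cong prod_zero)

lemma pow_mat_entry:
  assumes A: "A \<in> carrier_mat N N" and M: "\<And>i j. i < N \<Longrightarrow> j < N \<Longrightarrow> A $$ (i, j) = M i j"
    and ij: "i < N" "j < N"
  shows "(A ^\<^sub>m k) $$ (i, j) = kernel_pow N M k i j"
  using ij(2)
proof (induction k arbitrary: j)
  case 0 then show ?case using A ij(1) by simp
next
  case (Suc k)
  have "(A ^\<^sub>m Suc k) $$ (i, j) = (\<Sum>l<N. (A ^\<^sub>m k) $$ (i, l) * A $$ (l, j))"
    using A ij(1) Suc.prems by (simp add: scalar_prod_def atLeast0LessThan)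
  also have "\<dots> = (\<Sum>l<N. kernel_pow N M k i l * M l j)"
    using Suc M by (intro sum.cong refl) auto
  also have "\<dots> = kernel_pow N M (Suc k) i j" using kernel_pow_Suc_right[OF ij(1) Suc.prems] by simp
  finally show ?case .
qed

lemma kernel_pow_scale: "kernel_pow N (\<lambda>i j. c * M i j) k i j = c ^ k * kernel_pow N M k i j"
  by (induction k arbitrary: i) (auto simp: sum_distrib_left ac_simps)

lemma kernel_pow_abs_le:
  assumes "\<And>i j. \<bar>M i j\<bar> \<le> B"
  shows "\<bar>kernel_pow N M k i j\<bar> \<le> (real N * B) ^ k"
proof (induction k arbitrary: i)
  case (Suc k)
  have B0: "0 \<le> B" using assms[of 0 0] by simp
  have "\<bar>kernel_pow N M (Suc k) i j\<bar> \<le> (\<Sum>l<N. \<bar>M i l\<bar> * \<bar>kernel_pow N M k l j\<bar>)"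
    by (simp add: abs_mult[symmetric] sum_abs)
  also have "\<dots> \<le> (\<Sum>l<N. B * (real N * B) ^ k)"
    by (intro sum_mono mult_mono assms Suc.IH) (auto simp: B0)
  finally show ?case by simp
qed simp

section \<open>The Gibbs overlap\<close>

lemma mat_exp_entry_sums:
  assumes A: "A \<in> carrier_mat N N" and ij: "i < N" "j < N"
  shows "(\<lambda>k. (A ^\<^sub>m k) $$ (i, j) / fact k) sums (mat_exp A $$ (i, j))"
proof -
  define M where "M i j = (if i < N \<and> j < N then A $$ (i, j) else 0)" for i j
  define B where "B = (\<Sum>i<N. \<Sum>j<N. \<bar>A $$ (i, j)\<bar>)"
  have "\<bar>M i j\<bar> \<le> B" for i j
  proof (cases "i < N \<and> j < N")
    case True
    have "\<bar>A $$ (i, j)\<bar> \<le> (\<Sum>j<N. \<bar>A $$ (i, j)\<bar>)" by (rule member_le_sum) (use True in auto)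
    also have "\<dots> \<le> B" unfolding B_def
      by (rule member_le_sum[of i "{..<N}" "\<lambda>i. \<Sum>j<N. \<bar>A $$ (i, j)\<bar>"]) (use True in \<open>auto intro: sum_nonneg\<close>)
    finally show ?thesis using True unfolding M_def by simp
  qed (auto simp: M_def B_def intro!: sum_nonneg)
  then have "\<bar>(A ^\<^sub>m k) $$ (i, j)\<bar> \<le> (real N * B) ^ k" for k
    using pow_mat_entry[OF A _ ij, of M] kernel_pow_abs_le unfolding M_def by simp
  then have "norm ((A ^\<^sub>m k) $$ (i, j) / fact k) \<le> inverse (fact k) * (real N * B) ^ k" for k
    by (simp add: divide_simps mult.commute)
  then have "summable (\<lambda>k. (A ^\<^sub>m k) $$ (i, j) / fact k)"
    by (intro summable_comparison_test[OF _ summable_exp]) auto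
  moreover have "mat_exp A $$ (i, j) = (\<Sum>k. (A ^\<^sub>m k) $$ (i, j) / fact k)"
    unfolding mat_exp_def using A ij by simp
  ultimately show ?thesis by (simp add: summable_sums)
qed

lemma quadratic_form_mat:
  assumes "A \<in> carrier_mat N N" "v \<in> carrier_vec N"
  shows "v \<bullet> (A *\<^sub>v v) = (\<Sum>i<N. \<Sum>j<N. v $ i * A $$ (i, j) * v $ j)"
  using assms by (auto simp: scalar_prod_def atLeast0LessThan sum_distrib_left mult.assoc intro!: sum.cong)

lemma quadratic_form_mat_exp_sums:
  assumes A: "A \<in> carrier_mat N N" and v: "v \<in> carrier_vec N"
  shows "(\<lambda>k. (v \<bullet> (A ^\<^sub>m k *\<^sub>v v)) / fact k) sums (v \<bullet> (mat_exp A *\<^sub>v v))"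
proof -
  have "(\<lambda>k. \<Sum>i<N. \<Sum>j<N. v $ i * ((A ^\<^sub>m k) $$ (i, j) / fact k) * v $ j)
      sums (\<Sum>i<N. \<Sum>j<N. v $ i * mat_exp A $$ (i, j) * v $ j)"
    using mat_exp_entry_sums[OF A] by (intro sums_sum sums_mult sums_mult2) auto
  moreover have "mat_exp A \<in> carrier_mat N N" using A unfolding mat_exp_def by simp
  ultimately show ?thesis
    using quadratic_form_mat[OF pow_carrier_mat[OF A] v] quadratic_form_mat[OF _ v]
    by (simp add: sum_divide_distrib)
qed

lemma trace_mat_exp_sums:
  assumes A: "A \<in> carrier_mat N N"
  shows "(\<lambda>k. mat_trace (A ^\<^sub>m k) / fact k) sums mat_trace (mat_exp A)"
proof -
  have "(\<lambda>k. \<Sum>i<N. (A ^\<^sub>m k) $$ (i, i) / fact k) sums (\<Sum>i<N. mat_exp A $$ (i, i))"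
    using mat_exp_entry_sums[OF A] by (intro sums_sum) auto
  then show ?thesis using A unfolding mat_trace_def mat_exp_def by (simp add: sum_divide_distrib)
qed

text \<open>Termwise comparison of the exponential series; the term \<open>k = 0\<close> gives \<open>tr e\<^sup>A \<ge> N > 0\<close>.\<close>

lemma mat_exp_overlap_ge:
  assumes A: "A \<in> carrier_mat N N" and v: "v \<in> carrier_vec N" and N: "N > 0" and C: "C > 0"
    and tr_nonneg: "\<And>k. 0 \<le> mat_trace (A ^\<^sub>m k)"
    and tr_le: "\<And>k. mat_trace (A ^\<^sub>m k) \<le> C * (v \<bullet> (A ^\<^sub>m k *\<^sub>v v))"
  shows "1 / C \<le> (v \<bullet> (mat_exp A *\<^sub>v v)) / mat_trace (mat_exp A)"
proof -
  note tr = trace_mat_exp_sums[OF A] and q = quadratic_form_mat_exp_sums[OF A v]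
  have "mat_trace (A ^\<^sub>m k) / fact k \<le> C * ((v \<bullet> (A ^\<^sub>m k *\<^sub>v v)) / fact k)" for k
    using divide_right_mono[OF tr_le[of k], of "fact k"] by simp
  then have le: "mat_trace (mat_exp A) \<le> C * (v \<bullet> (mat_exp A *\<^sub>v v))"
    using sums_le[OF _ tr sums_mult[OF q]] by blast
  have "(\<Sum>k\<in>{0}. mat_trace (A ^\<^sub>m k) / fact k) \<le> (\<Sum>k. mat_trace (A ^\<^sub>m k) / fact k)"
    by (rule sum_le_suminf[OF sums_summable[OF tr]]) (auto intro!: divide_nonneg_nonneg tr_nonneg)
  then have "real N \<le> mat_trace (mat_exp A)"
    using sums_unique[OF tr] A by (simp add: mat_trace_def)
  then have "mat_trace (mat_exp A) > 0" using N by simp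
  with le C show ?thesis by (simp add: field_simps)
qed

lemma pow_neg_beta_H_AF_entry:
  assumes "i < hdim n L" "j < hdim n L"
  shows "(((- \<beta>) \<cdot>\<^sub>m H_AF n L) ^\<^sub>m k) $$ (i, j) = \<beta> ^ k * kernel_pow (hdim n L) (ham_kernel n L) k i j"
proof -
  have A: "(- \<beta>) \<cdot>\<^sub>m H_AF n L \<in> carrier_mat (hdim n L) (hdim n L)" using H_AF_carrier by simp
  have "((- \<beta>) \<cdot>\<^sub>m H_AF n L) $$ (i', j') = \<beta> * ham_kernel n L i' j'"
    if "i' < hdim n L" "j' < hdim n L" for i' j'
    using that H_AF_carrier[of n L] by (simp add: H_AF_entry)
  from pow_mat_entry[OF A this assms] show ?thesis by (simp add: kernel_pow_scale)
qed

lemma trace_pow_neg_beta_H_AF: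
  "mat_trace (((- \<beta>) \<cdot>\<^sub>m H_AF n L) ^\<^sub>m k)
    = \<beta> ^ k * (\<Sum>x<hdim n L. kernel_pow (hdim n L) (ham_kernel n L) k x x)"
proof -
  let ?A = "(- \<beta>) \<cdot>\<^sub>m H_AF n L"
  have "mat_trace (?A ^\<^sub>m k) = (\<Sum>x<hdim n L. (?A ^\<^sub>m k) $$ (x, x))"
    unfolding mat_trace_def by (simp add: dim_row_H_AF)
  also have "\<dots> = (\<Sum>x<hdim n L. \<beta> ^ k * kernel_pow (hdim n L) (ham_kernel n L) k x x)"
    by (intro sum.cong refl) (simp add: pow_neg_beta_H_AF_entry)
  finally show ?thesis by (simp add: sum_distrib_left)
qed

lemma dimer_moment_pow_neg_beta_H_AF:
  "D_vec n L \<bullet> (((- \<beta>) \<cdot>\<^sub>m H_AF n L) ^\<^sub>m k *\<^sub>v D_vec n L)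
    = \<beta> ^ k * (\<Sum>x<hdim n L. \<Sum>y<hdim n L.
        dimer_fun n L x * kernel_pow (hdim n L) (ham_kernel n L) k x y * dimer_fun n L y)"
proof -
  let ?A = "(- \<beta>) \<cdot>\<^sub>m H_AF n L"
  have A: "?A \<in> carrier_mat (hdim n L) (hdim n L)" using H_AF_carrier by simp
  have v: "D_vec n L \<in> carrier_vec (hdim n L)" unfolding D_vec_def by simp
  have "D_vec n L \<bullet> (?A ^\<^sub>m k *\<^sub>v D_vec n L)
      = (\<Sum>x<hdim n L. \<Sum>y<hdim n L. D_vec n L $ x * (?A ^\<^sub>m k) $$ (x, y) * D_vec n L $ y)"
    by (rule quadratic_form_mat[OF pow_carrier_mat[OF A] v])
  also have "\<dots> = (\<Sum>x<hdim n L. \<Sum>y<hdim n L. \<beta> ^ k *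
      (dimer_fun n L x * kernel_pow (hdim n L) (ham_kernel n L) k x y * dimer_fun n L y))"
    by (intro sum.cong refl) (simp add: pow_neg_beta_H_AF_entry D_vec_entry)
  finally show ?thesis by (simp add: sum_distrib_left)
qed

lemma gibbs_overlap_ge:
  assumes "\<beta> > 0"
  shows "1 / real (n + 1) ^ L \<le> (D_vec n L \<bullet> (mat_exp ((- \<beta>) \<cdot>\<^sub>m H_AF n L) *\<^sub>v D_vec n L))
           / mat_trace (mat_exp ((- \<beta>) \<cdot>\<^sub>m H_AF n L))"
proof (rule mat_exp_overlap_ge)
  let ?A = "(- \<beta>) \<cdot>\<^sub>m H_AF n L"
  show "?A \<in> carrier_mat (hdim n L) (hdim n L)" using H_AF_carrier by simp
  show "D_vec n L \<in> carrier_vec (hdim n L)" unfolding D_vec_def by simp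
  show "hdim n L > 0" "real (n + 1) ^ L > 0" by (simp_all add: hdim_def)
  show "0 \<le> mat_trace (?A ^\<^sub>m k)" for k
    unfolding trace_pow_neg_beta_H_AF hdim_eq trace_ham_kernel_pow using assms by (simp add: sum_nonneg)
  show "mat_trace (?A ^\<^sub>m k) \<le> real (n + 1) ^ L * (D_vec n L \<bullet> (?A ^\<^sub>m k *\<^sub>v D_vec n L))" for k
    using mult_left_mono[OF trace_le_dimer_moment[of n L k], of "\<beta> ^ k"] assms
    unfolding trace_pow_neg_beta_H_AF dimer_moment_pow_neg_beta_H_AF hdim_eq
    by (simp add: mult.left_commute)
qed

section \<open>The ground state\<close>

lemma H_AF_mult_vec:
  assumes "i < hdim n L"
  shows "(H_AF n L *\<^sub>v vec (hdim n L) f) $ i = - mat_app (hdim n L) (ham_kernel n L) f i"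
proof -
  have "(H_AF n L *\<^sub>v vec (hdim n L) f) $ i = (\<Sum>j<hdim n L. H_AF n L $$ (i, j) * f j)"
    using assms by (simp add: dim_row_H_AF dim_col_H_AF scalar_prod_def atLeast0LessThan)
  also have "\<dots> = (\<Sum>j<hdim n L. - (ham_kernel n L i j * f j))"
    using assms by (intro sum.cong refl) (simp add: H_AF_entry)
  finally show ?thesis using assms unfolding mat_app_def by (simp add: sum_negf)
qed

lemma eigenvector_H_AF_of_kernel:
  assumes w: "w \<in> vanish_from (hdim n L)" "dot (hdim n L) w w \<noteq> 0"
    "mat_app (hdim n L) (ham_kernel n L) w = (\<lambda>i. l * w i)"
  shows "eigenvector (H_AF n L) (vec (hdim n L) w) (- l)"
  unfolding eigenvector_def
proof (intro conjI)
  let ?N = "hdim n L"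
  have dr: "dim_row (H_AF n L) = ?N" by (rule dim_row_H_AF)
  show "vec ?N w \<in> carrier_vec (dim_row (H_AF n L))" using dr by simp
  show "vec ?N w \<noteq> 0\<^sub>v (dim_row (H_AF n L))"
  proof
    assume "vec ?N w = 0\<^sub>v (dim_row (H_AF n L))"
    then have "\<forall>i<?N. w i = 0" using dr by (metis index_vec index_zero_vec(1))
    then show False using w(2) unfolding dot_self_eq_0_iff by blast
  qed
  show "H_AF n L *\<^sub>v vec ?N w = (- l) \<cdot>\<^sub>v vec ?N w"
  proof (rule eq_vecI)
    fix i assume "i < dim_vec ((- l) \<cdot>\<^sub>v vec ?N w)"
    then have i: "i < ?N" by simp
    have "(H_AF n L *\<^sub>v vec ?N w) $ i = - mat_app ?N (ham_kernel n L) w i"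
      by (rule H_AF_mult_vec[OF i])
    also have "\<dots> = ((- l) \<cdot>\<^sub>v vec ?N w) $ i" using w(3) i by simp
    finally show "(H_AF n L *\<^sub>v vec ?N w) $ i = ((- l) \<cdot>\<^sub>v vec ?N w) $ i" .
  qed (simp add: dr)
qed

lemma kernel_eigenvector_of_H_AF:
  assumes v: "eigenvector (H_AF n L) v k"
  obtains f where "f \<in> vanish_from (hdim n L)" "dot (hdim n L) f f \<noteq> 0"
    "mat_app (hdim n L) (ham_kernel n L) f = (\<lambda>i. (- k) * f i)" "v = vec (hdim n L) f"
proof -
  let ?N = "hdim n L"
  have vc: "v \<in> carrier_vec ?N" "v \<noteq> 0\<^sub>v ?N" "H_AF n L *\<^sub>v v = k \<cdot>\<^sub>v v"
    using v unfolding eigenvector_def dim_row_H_AF by auto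
  define f where "f = (\<lambda>j. if j < ?N then v $ j else 0)"
  have vf: "v = vec ?N f" using vc(1) unfolding f_def by (auto intro!: eq_vecI)
  have "f \<in> vanish_from ?N" unfolding f_def vanish_from_def by auto
  moreover have "dot ?N f f \<noteq> 0"
  proof
    assume "dot ?N f f = 0"
    then have "v = 0\<^sub>v ?N" using vc(1) unfolding dot_self_eq_0_iff f_def by (auto intro!: eq_vecI)
    then show False using vc(2) by simp
  qed
  moreover have "mat_app ?N (ham_kernel n L) f = (\<lambda>i. (- k) * f i)"
  proof
    fix i show "mat_app ?N (ham_kernel n L) f i = (- k) * f i"
    proof (cases "i < ?N")
      case True
      have "(H_AF n L *\<^sub>v v) $ i = k * v $ i" using vc True by simp
      then show ?thesis using H_AF_mult_vec[OF True, of f] vf True unfolding f_def by simp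
    qed (simp add: mat_app_def f_def)
  qed
  ultimately show ?thesis using that vf by blast
qed

lemma ground_state_overlap:
  "\<exists>E0. eigenvalue (H_AF n L) E0 \<and> (\<forall>k. eigenvalue (H_AF n L) k \<longrightarrow> E0 \<le> k)
     \<and> (\<exists>v. eigenvector (H_AF n L) v E0 \<and> v \<bullet> D_vec n L \<noteq> 0)"
proof -
  let ?N = "hdim n L"
  define D where "D = (\<lambda>i. if i < ?N then dimer_fun n L i else 0)"
  have "D \<in> vanish_from ?N" unfolding D_def vanish_from_def by auto
  moreover have "(\<Sum>i<?N. kernel_pow ?N (ham_kernel n L) k i i)
      \<le> real ((n+1)^L) * (\<Sum>i<?N. \<Sum>j<?N. D i * kernel_pow ?N (ham_kernel n L) k i j * D j)" for k
    using trace_le_dimer_moment[of n L k] unfolding D_def hdim_eq by simp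
  ultimately obtain l where
    top: "\<exists>w\<in>vanish_from ?N. dot ?N w w \<noteq> 0 \<and> mat_app ?N (ham_kernel n L) w = (\<lambda>i. l * w i)"
    and max: "\<forall>m v. v \<in> vanish_from ?N \<longrightarrow> dot ?N v v \<noteq> 0
               \<longrightarrow> mat_app ?N (ham_kernel n L) v = (\<lambda>i. m * v i) \<longrightarrow> m \<le> l"
    and overlap: "\<exists>v\<in>vanish_from ?N. dot ?N v v \<noteq> 0
               \<and> mat_app ?N (ham_kernel n L) v = (\<lambda>i. l * v i) \<and> dot ?N v D \<noteq> 0"
    using top_eigenvector_overlap[OF symmetric_ham_kernel, of ?N n L D "real ((n+1)^L)"]
      ham_kernel_psd[of n L] unfolding hdim_eq by (auto simp: hdim_def)
  show ?thesis
  proof (intro exI[of _ "- l"] conjI allI impI)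
    show "eigenvalue (H_AF n L) (- l)"
      using top eigenvector_H_AF_of_kernel unfolding eigenvalue_def by blast
  next
    fix k assume "eigenvalue (H_AF n L) k"
    then obtain v where "eigenvector (H_AF n L) v k" unfolding eigenvalue_def by blast
    then obtain f where f: "f \<in> vanish_from ?N" "dot ?N f f \<noteq> 0"
      "mat_app ?N (ham_kernel n L) f = (\<lambda>i. (- k) * f i)"
      by (rule kernel_eigenvector_of_H_AF)
    from max[rule_format, OF f] show "- l \<le> k" by simp
  next
    obtain v where v: "v \<in> vanish_from ?N" "dot ?N v v \<noteq> 0"
      "mat_app ?N (ham_kernel n L) v = (\<lambda>i. l * v i)" "dot ?N v D \<noteq> 0"
      using overlap by blast
    have "vec ?N v \<bullet> D_vec n L = dot ?N v D"
      unfolding scalar_prod_def dot_def D_def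
      by (auto simp: dim_D_vec atLeast0LessThan D_vec_entry intro!: sum.cong)
    then show "\<exists>v. eigenvector (H_AF n L) v (- l) \<and> v \<bullet> D_vec n L \<noteq> 0"
      using eigenvector_H_AF_of_kernel[OF v(1-3)] v(4) by auto
  qed
qed

theorem mainTheorem15:
  fixes n L :: nat and \<beta> :: real
  assumes "n \<ge> 1" and "\<beta> > 0"
  shows "(D_vec n L \<bullet> (mat_exp ((- \<beta>) \<cdot>\<^sub>m H_AF n L) *\<^sub>v D_vec n L))
           / mat_trace (mat_exp ((- \<beta>) \<cdot>\<^sub>m H_AF n L))
         \<ge> 1 / real (n + 1) ^ L
     \<and> (\<exists>E0. eigenvalue (H_AF n L) E0 \<and> (\<forall>k. eigenvalue (H_AF n L) k \<longrightarrow> E0 \<le> k)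
          \<and> (\<exists>v. eigenvector (H_AF n L) v E0 \<and> v \<bullet> D_vec n L \<noteq> 0))"
  using gibbs_overlap_ge[OF assms(2)] ground_state_overlap by blast

end
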